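(* Let $\Gamma^{\overline k}=\{T\in\mathrm{C}^\times: T\,\mathrm{C}^{\overline k}\,T^{-1}\subseteq\mathrm{C}^{\overline k}\}$ for $k=0,1,2,3$. <ul> <li>If $n\ge4$ and $n\equiv0\pmod 4$: $\mathrm{Q}=\Gamma^{\overline1}=\Gamma^{\overline3}$ and $\mathrm{Q}'=\Gamma^{\overline0}=\Gamma^{\overline2}$, and $\mathrm{Q}\neq\mathrm{Q}'$.</li> <li>If $n\ge4$ and $n\equiv1,2,3\pmod4$: $\mathrm{Q}=\Gamma^{\overline0}=\Gamma^{\overline1}=\Gamma^{\overline2}=\Gamma^{\overline3}$.</li> <li>If $n=2$: $\Gamma^{\overline0}=\mathrm{C}^\times$, and $\Gamma^{\overline1}=\Gamma^{\overline2}=\mathrm{Q}=\mathrm{P}=\mathrm{C}^{\times(0)}\cup\mathrm{C}^{\times(1)}$, and this group is different from $\mathrm{C}^\times$.</li> <li>If $n=3$: $\Gamma^{\overline0}=\Gamma^{\overline3}=\mathrm{C}^\times$, and $\Gamma^{\overline1}=\Gamma^{\overline2}=\mathrm{Q}=\mathrm{P}=\mathrm{Z}^\times\mathrm{C}^{\times(0)}$, and this group is different from $\mathrm{C}^\times$.</li> </ul> Consequently, for all $n\ge2$, $\Gamma^{\overline1}\subseteq\Gamma^{\overline k}$ for $k=0,1,2,3$, and $$\Gamma^{\overline1}=\mathrm{Q}=\{T\in\mathrm{C}^\times:\ T\,\mathrm{C}^{\overline k}\,T^{-1}\subseteq\mathrm{C}^{\overline k}\ \text{for}\ k=0,1,2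,3\}.$$
   Context: Let $\mathrm{C}$ be either the real Clifford algebra $C\ell_{p,q}$ with $p+q=n$, or the complex Clifford algebra $C\ell(\mathbb{C}^n)$, with $n\ge 2$. It has identity $e$ and generators $e_1,\dots,e_n$ satisfying $e_ae_b+e_be_a=2\eta_{ab}e$. In the real case $\eta=\mathrm{diag}(1,\dots,1,-1,\dots,-1)$ with $p$ entries $+1$ and $q$ entries $-1$. In the complex case $\eta=I_n$. $\mathrm{C}^k$ is the grade-$k$ subspace, spanned by the products $e_{a_1}\cdots e_{a_k}$ with $a_1<\dots<a_k$. For $m=0,1,2,3$ let $\mathrm{C}^{\overline m}=\bigoplus_{k\equiv m\pmod4}\mathrm{C}^k$. The even subspace is $\mathrm{C}^{(0)}=\bigoplus_{k\text{ even}}\mathrm{C}^k$ and the odd subspace is $\mathrm{C}^{(1)}=\bigoplus_{k\text{ odd}}\mathrm{C}^k$. The reversion $U\mapsto\tilde U$ is the linear anti-automorphism acting on $\mathrm{C}^k$ as $(-1)^{k(k-1)/2}$. For $S\subseteq\mathrm{C}$, $S^\times$ is the set of elements of $S$ invertible in $\mathrm{C}$, and $\mathrm{C}^{\times(j)}:=(\mathrm{C}^{(j)})^\times$. $\mathrm{Z}$ is the center: $\mathrm{Z}=\mathrm{C}^0$ for $n$ even and $\mathrm{Z}=\mathrm{C}^0\oplus\mathrm{C}^n$ for $n$ odd. Define: <ul> <li>$\mathrm{P}:=\mathrm{Z}^\times(\mathrm{C}^{\times(0)}\cup\mathrm{C}^{\times(1)})=\{WT: W\in\mathrm{Z}^\times,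 T\in\mathrm{C}^{\times(0)}\cup\mathrm{C}^{\times(1)}\}$;</li> <li>$\mathrm{Q}:=\{T\in\mathrm{P}:\tilde TT\in\mathrm{Z}^\times\}$;</li> <li>$\mathrm{Q}':=\{T\in\mathrm{P}:\tilde TT\in(\mathrm{C}^0\oplus\mathrm{C}^n)^\times\}$.</li> </ul> *)

theory Defs
  imports Complex_Main
begin

text \<open>Clifford algebra on generators e_0,...,e_(n-1) over a field of scalars 'a
  (real or complex), with diagonal metric eta (eta i = +1 or -1).
  An element is represented by its coefficient function on blades:
  a function from finite index sets A (subsets of {..<n}) to scalars,
  the blade e_A being the ordered product of the e_i, i in A.\<close>

definition clalg :: "nat \<Rightarrow> (nat set \<Rightarrow> 'a::zero) set" where
  "clalg n = {f. \<forall>A. \<not> A \<subseteq> {..<n} \<longrightarrow> f A = 0}"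

text \<open>Sign/metric factor in e_A e_B = bsign eta A B * e_(A symdiff B).\<close>
definition bsign :: "(nat \<Rightarrow> 'a::comm_ring_1) \<Rightarrow> nat set \<Rightarrow> nat set \<Rightarrow> 'a" where
  "bsign eta A B = (-1) ^ card {(a, b). a \<in> A \<and> b \<in> B \<and> b < a} * (\<Prod>i\<in>A \<inter> B. eta i)"

definition clmul :: "nat \<Rightarrow> (nat \<Rightarrow> 'a::comm_ring_1) \<Rightarrow> (nat set \<Rightarrow> 'a) \<Rightarrow> (nat set \<Rightarrow> 'a) \<Rightarrow> (nat set \<Rightarrow> 'a)" where
  "clmul n eta f g = (\<lambda>C. \<Sum>A\<in>Pow {..<n}. \<Sum>B\<in>Pow {..<n}.
      if (A - B) \<union> (B - A) = C then bsign eta A B * f A * g B else 0)"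

definition clone :: "nat set \<Rightarrow> 'a::{zero,one}" where
  "clone = (\<lambda>A. if A = {} then 1 else 0)"

definition clunits :: "nat \<Rightarrow> (nat \<Rightarrow> 'a::comm_ring_1) \<Rightarrow> (nat set \<Rightarrow> 'a) set \<Rightarrow> (nat set \<Rightarrow> 'a) set" where
  "clunits n eta S = {T \<in> S. T \<in> clalg n \<and> (\<exists>U\<in>clalg n. clmul n eta T U = clone \<and> clmul n eta U T = clone)}"

definition clinv :: "nat \<Rightarrow> (nat \<Rightarrow> 'a::comm_ring_1) \<Rightarrow> (nat set \<Rightarrow> 'a) \<Rightarrow> (nat set \<Rightarrow> 'a)" where
  "clinv n eta T = (THE U. U \<in> clalg n \<and> clmul n eta T U = clone \<and> clmul n eta U T = clone)"

definition grade :: "nat \<Rightarrow> nat \<Rightarrow> (nat set \<Rightarrow> 'a::zero) set" where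
  "grade n k = {f \<in> clalg n. \<forall>A. card A \<noteq> k \<longrightarrow> f A = 0}"

definition grmod4 :: "nat \<Rightarrow> nat \<Rightarrow> (nat set \<Rightarrow> 'a::zero) set" where
  "grmod4 n m = {f \<in> clalg n. \<forall>A. card A mod 4 \<noteq> m \<longrightarrow> f A = 0}"

definition cleven :: "nat \<Rightarrow> (nat set \<Rightarrow> 'a::zero) set" where
  "cleven n = {f \<in> clalg n. \<forall>A. odd (card A) \<longrightarrow> f A = 0}"

definition clodd :: "nat \<Rightarrow> (nat set \<Rightarrow> 'a::zero) set" where
  "clodd n = {f \<in> clalg n. \<forall>A. even (card A) \<longrightarrow> f A = 0}"

definition ssum :: "(nat set \<Rightarrow> 'a::plus) set \<Rightarrow> (nat set \<Rightarrow> 'a) set \<Rightarrow> (nat set \<Rightarrow> 'a) set" where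
  "ssum S T = {(\<lambda>A. x A + y A) | x y. x \<in> S \<and> y \<in> T}"

definition clcenter :: "nat \<Rightarrow> (nat set \<Rightarrow> 'a::{zero,plus}) set" where
  "clcenter n = (if even n then grade n 0 else ssum (grade n 0) (grade n n))"

definition clrev :: "(nat set \<Rightarrow> 'a::comm_ring_1) \<Rightarrow> (nat set \<Rightarrow> 'a)" where
  "clrev f = (\<lambda>A. (-1) ^ (card A * (card A - 1) div 2) * f A)"

definition setP :: "nat \<Rightarrow> (nat \<Rightarrow> 'a::comm_ring_1) \<Rightarrow> (nat set \<Rightarrow> 'a) set" where
  "setP n eta = {clmul n eta W T | W T. W \<in> clunits n eta (clcenter n) \<and>
                   T \<in> clunits n eta (cleven n) \<union> clunits n eta (clodd n)}"

definition setQ :: "nat \<Rightarrow> (nat \<Rightarrow> 'a::comm_ring_1) \<Rightarrow> (nat set \<Rightarrow> 'a) set" where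
  "setQ n eta = {T \<in> setP n eta. clmul n eta (clrev T) T \<in> clunits n eta (clcenter n)}"

definition setQ' :: "nat \<Rightarrow> (nat \<Rightarrow> 'a::comm_ring_1) \<Rightarrow> (nat set \<Rightarrow> 'a) set" where
  "setQ' n eta = {T \<in> setP n eta. clmul n eta (clrev T) T \<in> clunits n eta (ssum (grade n 0) (grade n n))}"

definition Gamma :: "nat \<Rightarrow> (nat \<Rightarrow> 'a::comm_ring_1) \<Rightarrow> nat \<Rightarrow> (nat set \<Rightarrow> 'a) set" where
  "Gamma n eta k = {T \<in> clunits n eta (clalg n). \<forall>X \<in> grmod4 n k.
       clmul n eta (clmul n eta T X) (clinv n eta T) \<in> grmod4 n k}"

definition gamma_claims :: "nat \<Rightarrow> (nat \<Rightarrow> 'a::comm_ring_1) \<Rightarrow> bool" where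
  "gamma_claims n eta \<longleftrightarrow>
    (n \<ge> 4 \<and> n mod 4 = 0 \<longrightarrow>
       setQ n eta = Gamma n eta 1 \<and> Gamma n eta 1 = Gamma n eta 3 \<and>
       setQ' n eta = Gamma n eta 0 \<and> Gamma n eta 0 = Gamma n eta 2 \<and>
       setQ n eta \<noteq> setQ' n eta) \<and>
    (n \<ge> 4 \<and> n mod 4 \<in> {1, 2, 3} \<longrightarrow>
       setQ n eta = Gamma n eta 0 \<and> Gamma n eta 0 = Gamma n eta 1 \<and>
       Gamma n eta 1 = Gamma n eta 2 \<and> Gamma n eta 2 = Gamma n eta 3) \<and>
    (n = 2 \<longrightarrow>
       Gamma n eta 0 = clunits n eta (clalg n) \<and>
       Gamma n eta 1 = Gamma n eta 2 \<and> Gamma n eta 2 = setQ n eta \<and>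
       setQ n eta = setP n eta \<and>
       setP n eta = clunits n eta (cleven n) \<union> clunits n eta (clodd n) \<and>
       clunits n eta (cleven n) \<union> clunits n eta (clodd n) \<noteq> clunits n eta (clalg n)) \<and>
    (n = 3 \<longrightarrow>
       Gamma n eta 0 = clunits n eta (clalg n) \<and> Gamma n eta 3 = clunits n eta (clalg n) \<and>
       Gamma n eta 1 = Gamma n eta 2 \<and> Gamma n eta 2 = setQ n eta \<and>
       setQ n eta = setP n eta \<and>
       setP n eta = {clmul n eta W T | W T. W \<in> clunits n eta (clcenter n) \<and> T \<in> clunits n eta (cleven n)} \<and>
       {clmul n eta W T | W T. W \<in> clunits n eta (clcenter n) \<and> T \<in> clunits n eta (cleven n)}
          \<noteq> clunits n eta (clalg n)) \<and>
    (n \<ge> 2 \<longrightarrow>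
       (\<forall>k\<in>{0, 1, 2, 3}. Gamma n eta 1 \<subseteq> Gamma n eta k) \<and>
       Gamma n eta 1 = setQ n eta \<and>
       setQ n eta = {T \<in> clunits n eta (clalg n). \<forall>k\<in>{0, 1, 2, 3}. \<forall>X \<in> grmod4 n k.
           clmul n eta (clmul n eta T X) (clinv n eta T) \<in> grmod4 n k})"

definition sig_pq :: "nat \<Rightarrow> nat \<Rightarrow> real" where
  "sig_pq p i = (if i < p then 1 else -1)"

end

theory Submission
  imports Defs
begin

(*
  If conjugation by T preserves C^k, apply reversion and the grade involution: both act on
  C^k as scalars determined by k mod 4, so T~T and T^-1 alpha(T) commute with all of C^k.
  Since e_B commutes with e_A iff |A||B| + |A \<inter> B| is even, testing against blades of a grade
  m = k (mod 4), 1 <= m < n, shows that this commutant lies in span{1, I}, I the pseudoscalar.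
  When I is central (n odd, or m odd) the commutant is the centre Z; then T^-1 alpha(T) in Z
  splits T into a central times a homogeneous factor, and T~T in Z, i.e. T in Q. Conversely,
  for T = W S with W central and S homogeneous, alpha(S) = +-S and T~T commuting with X suffice
  to keep T X T^-1 in C^k. For n and k even the commutant is span{1, I}, which is where Q'
  comes from; reversion kills the I-component of T~T exactly when n = 2 (mod 4). In dimensions
  2 and 3 the low grades are central, and 2 + e_0 is an invertible element outside P.
*)

section \<open>Signs of blade products\<close>

abbreviation symdiff :: "'b set \<Rightarrow> 'b set \<Rightarrow> 'b set" where "symdiff A B \<equiv> (A - B) \<union> (B - A)"

definition inversions :: "nat set \<Rightarrow> nat set \<Rightarrow> (nat \<times> nat) set" where
  "inversions A B = {(a, b). a \<in> A \<and> b \<in> B \<and> b < a}"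

lemma finite_inversions[simp]: "finite A \<Longrightarrow> finite B \<Longrightarrow> finite (inversions A B)"
  by (rule finite_subset[of _ "A \<times> B"]) (auto simp: inversions_def)

lemma inversions_symdiff_left: "inversions (symdiff X Y) D = symdiff (inversions X D) (inversions Y D)"
  by (auto simp: inversions_def)

lemma inversions_symdiff_right: "inversions A (symdiff Y Z) = symdiff (inversions A Y) (inversions A Z)"
  by (auto simp: inversions_def)

lemma card_inversions_both:
  assumes "finite A" "finite B"
  shows "card (inversions A B) + card (inversions B A) + card (A \<inter> B) = card A * card B"
proof -
  have e: "A \<times> B = inversions A B \<union> (prod.swap ` inversions B A) \<union> ((\<lambda>x. (x, x)) ` (A \<inter> B))"
    by (auto simp: inversions_def image_iff)
  have f1: "finite (inversions A B)" "finite (prod.swap ` inversions B A)" "finite ((\<lambda>x. (x, x)) ` (A \<inter> B))"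
    using assms by auto
  have "card (A \<times> B) = card (inversions A B \<union> (prod.swap ` inversions B A)) + card ((\<lambda>x. (x, x)) ` (A \<inter> B))"
    unfolding e using f1 by (intro card_Un_disjoint) (auto simp: inversions_def)
  also have "card (inversions A B \<union> (prod.swap ` inversions B A)) = card (inversions A B) + card (prod.swap ` inversions B A)"
    using f1 by (intro card_Un_disjoint) (auto simp: inversions_def)
  also have "card (prod.swap ` inversions B A) = card (inversions B A)"
    by (rule card_image) (auto simp: inj_on_def)
  also have "card ((\<lambda>x. (x, x)) ` (A \<inter> B)) = card (A \<inter> B)"
    by (rule card_image) (simp add: inj_on_def)
  finally show ?thesis by (simp add: card_cartesian_product)
qed

lemma card_inversions_self: "finite A \<Longrightarrow> card A * (card A - 1) div 2 = card (inversions A A)"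
proof -
  assume f: "finite A"
  have "2 * card (inversions A A) + card A = card A * card A" using card_inversions_both[OF f f] by simp
  hence "card A * (card A - 1) = 2 * card (inversions A A)"
    by (simp add: diff_mult_distrib2)
  thus ?thesis by simp
qed

lemma even_iff_mod4_square:
  fixes p m :: nat
  assumes "2 * p + m = m * m"
  shows "even p \<longleftrightarrow> m mod 4 < 2"
proof -
  obtain q t where m: "m = 4 * q + t" and t: "t < 4"
    by (metis div_mult_mod_eq mod_less_divisor zero_less_numeral mult.commute)
  obtain Q where Q: "Q = q * q" by simp
  have "m * m = 16 * Q + 8 * t * q + t * t" unfolding m Q by (simp add: algebra_simps)
  with assms have e: "2 * p + 4 * q + t = 16 * Q + 8 * t * q + t * t" unfolding m by simp
  have mm: "m mod 4 = t" using m t by simp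
  from t have "t = 0 \<or> t = 1 \<or> t = 2 \<or> t = 3" by auto
  thus ?thesis using e unfolding mm by (elim disjE) (simp, presburger)+
qed

lemma neg_one_power_square: "((-1::'a::comm_ring_1) ^ k) * (-1) ^ k = 1"
  by (simp add: power_add[symmetric])

lemma neg_one_power_eq_iff: "((-1::'a::{comm_ring_1,ring_char_0}) ^ a = (-1) ^ b) \<longleftrightarrow> (even a \<longleftrightarrow> even b)"
  by (cases "even a"; cases "even b") auto

lemma neg_one_power_card_symdiff:
  assumes "finite S" "finite T"
  shows "(-1::'a::comm_ring_1) ^ card (symdiff S T) = (-1) ^ card S * (-1) ^ card T"
proof -
  have 1: "card S = card (S - T) + card (S \<inter> T)"
    using card_Int_Diff[OF assms(1), of T] by simp
  have 2: "card T = card (T - S) + card (S \<inter> T)"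
    using card_Int_Diff[OF assms(2), of S] by (simp add: Int_commute)
  have 3: "card (symdiff S T) = card (S - T) + card (T - S)"
    using assms by (intro card_Un_disjoint) auto
  have "(-1::'a) ^ card S * (-1) ^ card T = (-1) ^ card (symdiff S T) * ((-1) ^ card (S \<inter> T))\<^sup>2"
    unfolding 1 2 3 by (simp add: power_add power2_eq_square algebra_simps)
  also have "((-1::'a) ^ card (S \<inter> T))\<^sup>2 = 1"
    by (simp add: power_mult[symmetric] mult.commute[of _ 2] power_mult)
  finally show ?thesis by simp
qed

definition rev_sign :: "nat \<Rightarrow> 'a::comm_ring_1" where "rev_sign k = (if k mod 4 < 2 then 1 else -1)"

lemma neg_one_power_inversions_self: "finite A \<Longrightarrow> (-1::'a::comm_ring_1) ^ card (inversions A A) = rev_sign (card A)"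
proof -
  assume f: "finite A"
  have "2 * card (inversions A A) + card A = card A * card A" using card_inversions_both[OF f f] by simp
  from even_iff_mod4_square[OF this] show ?thesis by (auto simp: rev_sign_def)
qed

lemma rev_sign_square[simp]: "rev_sign k * rev_sign k = (1::'a::comm_ring_1)" by (simp add: rev_sign_def)

lemma bsign_inversions: "bsign eta A B = (-1) ^ card (inversions A B) * (\<Prod>i\<in>A \<inter> B. eta i)"
  by (simp add: bsign_def inversions_def)

section \<open>Coefficient functions\<close>

lemma sum_swap3: "(\<Sum>x\<in>S. \<Sum>y\<in>T. \<Sum>z\<in>U. f x y z) = (\<Sum>y\<in>T. \<Sum>z\<in>U. \<Sum>x\<in>S. f x y z)"
proof -
  have "(\<Sum>x\<in>S. \<Sum>y\<in>T. \<Sum>z\<in>U. f x y z) = (\<Sum>y\<in>T. \<Sum>x\<in>S. \<Sum>z\<in>U. f x y z)"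
    by (rule sum.swap)
  also have "\<dots> = (\<Sum>y\<in>T. \<Sum>z\<in>U. \<Sum>x\<in>S. f x y z)"
    by (rule sum.cong[OF refl]) (rule sum.swap)
  finally show ?thesis .
qed

lemma sum_if_eq_conj:
  assumes "finite S" "Y \<in> S"
  shows "(\<Sum>X\<in>S. if Y = X \<and> P X then g X else 0) = (if P Y then g Y else (0::'a::comm_monoid_add))"
proof -
  have "(\<Sum>X\<in>S. if Y = X \<and> P X then g X else 0) = (\<Sum>X\<in>S. if Y = X then (if P Y then g Y else 0) else 0)"
    by (rule sum.cong) auto
  also have "\<dots> = (if P Y then g Y else 0)" using assms by simp
  finally show ?thesis .
qed

definition czero :: "nat set \<Rightarrow> 'a::zero" where "czero = (\<lambda>_. 0)"

definition cadd :: "(nat set \<Rightarrow> 'a::comm_ring_1) \<Rightarrow> (nat set \<Rightarrow> 'a) \<Rightarrow> (nat set \<Rightarrow> 'a)" (infixl "\<oplus>" 65)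
  where "f \<oplus> g = (\<lambda>A. f A + g A)"

definition scale :: "'a::comm_ring_1 \<Rightarrow> (nat set \<Rightarrow> 'a) \<Rightarrow> (nat set \<Rightarrow> 'a)"
  where "scale c f = (\<lambda>A. c * f A)"

definition blade :: "nat set \<Rightarrow> nat set \<Rightarrow> 'a::comm_ring_1" where "blade B = (\<lambda>C. if C = B then 1 else 0)"

definition even_part :: "(nat set \<Rightarrow> 'a::zero) \<Rightarrow> nat set \<Rightarrow> 'a" where "even_part f = (\<lambda>A. if even (card A) then f A else 0)"

definition odd_part :: "(nat set \<Rightarrow> 'a::zero) \<Rightarrow> nat set \<Rightarrow> 'a" where "odd_part f = (\<lambda>A. if odd (card A) then f A else 0)"

definition grade_inv :: "(nat set \<Rightarrow> 'a::comm_ring_1) \<Rightarrow> (nat set \<Rightarrow> 'a)" where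
  "grade_inv f = (\<lambda>A. (-1) ^ card A * f A)"

lemma cadd_apply[simp]: "(f \<oplus> g) A = f A + g A" by (simp add: cadd_def)

lemma scale_apply[simp]: "scale c f A = c * f A" by (simp add: scale_def)

lemma blade_apply: "blade B A = (if A = B then 1 else 0)" by (simp add: blade_def)

lemma clone_eq_blade: "clone = blade {}" by (simp add: clone_def blade_def fun_eq_iff)

lemma scale_scale[simp]: "scale a (scale b f) = scale (a * b) f" by (rule ext) simp

lemma scale_one[simp]: "scale 1 f = f" by (rule ext) simp

lemma scale_zero[simp]: "scale 0 f = czero" by (rule ext) (simp add: czero_def)

lemma scale_czero[simp]: "scale a czero = czero" by (rule ext) (simp add: czero_def)

lemma cadd_czero[simp]: "f \<oplus> czero = f" "czero \<oplus> f = f" by (rule ext, simp add: czero_def)+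

lemma even_part_cadd_odd_part: "f = even_part f \<oplus> odd_part f" by (rule ext) (simp add: even_part_def odd_part_def)

lemma clrev_apply_inversions:
  assumes "finite A"
  shows "clrev f A = (-1) ^ card (inversions A A) * f A"
  unfolding clrev_def card_inversions_self[OF assms] ..

lemma clrev_apply: "finite A \<Longrightarrow> clrev f A = rev_sign (card A) * f A"
  by (simp add: clrev_apply_inversions neg_one_power_inversions_self)

lemma grade_inv_clalg[simp]: "f \<in> clalg n \<Longrightarrow> grade_inv f \<in> clalg n"
  by (simp add: clalg_def grade_inv_def)

lemma clrev_clalg[simp]: "f \<in> clalg n \<Longrightarrow> clrev f \<in> clalg n" by (simp add: clalg_def clrev_def)

lemma grade_inv_grade_inv[simp]: "grade_inv (grade_inv f) = f"
  by (rule ext) (simp add: grade_inv_def flip: mult.assoc power_add)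

lemma clrev_clrev[simp]: "clrev (clrev f) = f" by (rule ext) (simp add: clrev_def flip: mult.assoc power_add)

lemma grade_inv_cadd[simp]: "grade_inv (f \<oplus> g) = grade_inv f \<oplus> grade_inv g"
  by (rule ext) (simp add: grade_inv_def algebra_simps)

lemma clrev_cadd[simp]: "clrev (f \<oplus> g) = clrev f \<oplus> clrev g" by (rule ext) (simp add: clrev_def algebra_simps)

lemma grade_inv_scale[simp]: "grade_inv (scale c f) = scale c (grade_inv f)"
  by (rule ext) (simp add: grade_inv_def algebra_simps)

lemma clrev_scale[simp]: "clrev (scale c f) = scale c (clrev f)" by (rule ext) (simp add: clrev_def algebra_simps)

lemma grade_inv_clone[simp]: "grade_inv clone = clone" by (rule ext) (simp add: grade_inv_def clone_def)

lemma clrev_clone[simp]: "clrev clone = clone" by (rule ext) (simp add: clrev_def clone_def)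

lemma grade_inv_clrev: "grade_inv (clrev f) = clrev (grade_inv f)"
  by (rule ext) (simp add: grade_inv_def clrev_def algebra_simps)

section \<open>The Clifford algebra of a diagonal metric\<close>

locale clifford =
  fixes n :: nat and eta :: "nat \<Rightarrow> 'a::field_char_0"
  assumes eta_sq: "\<And>i. eta i * eta i = 1"
begin

abbreviation cmul (infixl "\<odot>" 70) where "x \<odot> y \<equiv> clmul n eta x y"
abbreviation Blades where "Blades \<equiv> Pow {..<n}"
abbreviation Cl :: "(nat set \<Rightarrow> 'a) set" where "Cl \<equiv> clalg n"
abbreviation cinv :: "(nat set \<Rightarrow> 'a) \<Rightarrow> (nat set \<Rightarrow> 'a)" where "cinv T \<equiv> clinv n eta T"
abbreviation pscalar :: "nat set \<Rightarrow> 'a" where "pscalar \<equiv> blade {..<n}"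

definition invertible :: "(nat set \<Rightarrow> 'a) \<Rightarrow> bool" where "invertible T \<longleftrightarrow> T \<in> clunits n eta Cl"

definition eta_prod :: "nat set \<Rightarrow> 'a" where "eta_prod X = (\<Prod>i\<in>X. eta i)"

lemma eta_prod_square: "eta_prod X * eta_prod X = 1"
  unfolding eta_prod_def prod.distrib[symmetric] by (simp add: eta_sq)

lemma eta_prod_symdiff:
  assumes "finite X" "finite Y"
  shows "eta_prod (symdiff X Y) = eta_prod X * eta_prod Y"
proof -
  have a: "eta_prod X = eta_prod (X \<inter> Y) * eta_prod (X - Y)"
    unfolding eta_prod_def by (rule prod.Int_Diff[OF assms(1)])
  have b: "eta_prod Y = eta_prod (X \<inter> Y) * eta_prod (Y - X)" unfolding eta_prod_def using assms
    by (subst prod.Int_Diff[OF assms(2), of _ X]) (simp add: Int_commute)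
  have c: "eta_prod (symdiff X Y) = eta_prod (X - Y) * eta_prod (Y - X)" unfolding eta_prod_def using assms
    by (intro prod.union_disjoint) auto
  show ?thesis unfolding a b c using eta_prod_square[of "X \<inter> Y"]
    by (simp add: algebra_simps)
qed

lemma bsign_eta_prod: "bsign eta A B = (-1) ^ card (inversions A B) * eta_prod (A \<inter> B)"
  by (simp add: bsign_inversions eta_prod_def)

lemma bsign_cocycle:
  assumes "finite A" "finite B" "finite D"
  shows "bsign eta A B * bsign eta (symdiff A B) D = bsign eta A (symdiff B D) * bsign eta B D"
proof -
  have s1: "(-1::'a) ^ card (inversions (symdiff A B) D) = (-1) ^ card (inversions A D) * (-1) ^ card (inversions B D)"
    unfolding inversions_symdiff_left using assms by (intro neg_one_power_card_symdiff) auto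
  have s2: "(-1::'a) ^ card (inversions A (symdiff B D)) = (-1) ^ card (inversions A B) * (-1) ^ card (inversions A D)"
    unfolding inversions_symdiff_right using assms by (intro neg_one_power_card_symdiff) auto
  have e1: "eta_prod (symdiff A B \<inter> D) = eta_prod (A \<inter> D) * eta_prod (B \<inter> D)"
  proof -
    have "symdiff A B \<inter> D = symdiff (A \<inter> D) (B \<inter> D)" by auto
    thus ?thesis using assms eta_prod_symdiff by auto
  qed
  have e2: "eta_prod (A \<inter> symdiff B D) = eta_prod (A \<inter> B) * eta_prod (A \<inter> D)"
  proof -
    have "A \<inter> symdiff B D = symdiff (A \<inter> B) (A \<inter> D)" by auto
    thus ?thesis using assms eta_prod_symdiff by auto
  qed
  show ?thesis unfolding bsign_eta_prod s1 s2 e1 e2 by (simp add: algebra_simps)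
qed

lemma finite_Blades[simp]: "finite Blades" by simp

lemma mul_apply: "(f \<odot> g) C = (\<Sum>A\<in>Blades. \<Sum>B\<in>Blades. if symdiff A B = C then bsign eta A B * f A * g B else 0)"
  by (simp add: clmul_def)

lemma mul_assoc_expand_left:
  "((f \<odot> g) \<odot> h) C = (\<Sum>A\<in>Blades. \<Sum>B\<in>Blades. \<Sum>D\<in>Blades. if symdiff (symdiff A B) D = C then
      bsign eta A B * bsign eta (symdiff A B) D * f A * g B * h D else 0)"
proof -
  have "((f \<odot> g) \<odot> h) C = (\<Sum>X\<in>Blades. \<Sum>D\<in>Blades. \<Sum>A\<in>Blades. \<Sum>B\<in>Blades.
     if symdiff A B = X \<and> symdiff X D = C then bsign eta A B * bsign eta X D * f A * g B * h D else 0)"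
    unfolding mul_apply
    by (intro sum.cong refl) (auto simp: sum_distrib_left sum_distrib_right if_distrib if_distribR algebra_simps intro!: sum.cong)
  also have "\<dots> = (\<Sum>D\<in>Blades. \<Sum>A\<in>Blades. \<Sum>B\<in>Blades. \<Sum>X\<in>Blades.
     if symdiff A B = X \<and> symdiff X D = C then bsign eta A B * bsign eta X D * f A * g B * h D else 0)"
    by (subst sum.swap) (rule sum.cong[OF refl], rule sum_swap3)
  also have "\<dots> = (\<Sum>D\<in>Blades. \<Sum>A\<in>Blades. \<Sum>B\<in>Blades.
     if symdiff (symdiff A B) D = C then bsign eta A B * bsign eta (symdiff A B) D * f A * g B * h D else 0)"
    by (intro sum.cong refl) (subst sum_if_eq_conj[OF finite_Blades]; auto)
  also have "\<dots> = (\<Sum>A\<in>Blades. \<Sum>B\<in>Blades. \<Sum>D\<in>Blades.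
     if symdiff (symdiff A B) D = C then bsign eta A B * bsign eta (symdiff A B) D * f A * g B * h D else 0)"
    by (rule sum_swap3)
  finally show ?thesis .
qed

lemma mul_assoc_expand_right:
  "(f \<odot> (g \<odot> h)) C = (\<Sum>A\<in>Blades. \<Sum>B\<in>Blades. \<Sum>D\<in>Blades. if symdiff A (symdiff B D) = C then
      bsign eta A (symdiff B D) * bsign eta B D * f A * g B * h D else 0)"
proof -
  have "(f \<odot> (g \<odot> h)) C = (\<Sum>A\<in>Blades. \<Sum>Y\<in>Blades. \<Sum>B\<in>Blades. \<Sum>D\<in>Blades.
     if symdiff B D = Y \<and> symdiff A Y = C then bsign eta A Y * bsign eta B D * f A * g B * h D else 0)"
    unfolding mul_apply
    by (intro sum.cong refl) (auto simp: sum_distrib_left sum_distrib_right if_distrib if_distribR algebra_simps intro!: sum.cong)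
  also have "\<dots> = (\<Sum>A\<in>Blades. \<Sum>B\<in>Blades. \<Sum>D\<in>Blades. \<Sum>Y\<in>Blades.
     if symdiff B D = Y \<and> symdiff A Y = C then bsign eta A Y * bsign eta B D * f A * g B * h D else 0)"
    by (rule sum.cong[OF refl]) (rule sum_swap3)
  also have "\<dots> = (\<Sum>A\<in>Blades. \<Sum>B\<in>Blades. \<Sum>D\<in>Blades.
     if symdiff A (symdiff B D) = C then bsign eta A (symdiff B D) * bsign eta B D * f A * g B * h D else 0)"
    by (intro sum.cong refl) (subst sum_if_eq_conj[OF finite_Blades]; auto)
  finally show ?thesis .
qed

lemma mul_assoc: "(f \<odot> g) \<odot> h = f \<odot> (g \<odot> h)"
proof
  fix C
  show "((f \<odot> g) \<odot> h) C = (f \<odot> (g \<odot> h)) C"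
    unfolding mul_assoc_expand_left mul_assoc_expand_right
  proof (intro sum.cong refl)
    fix A B D assume "A \<in> Blades" "B \<in> Blades" "D \<in> Blades"
    hence f: "finite A" "finite B" "finite D" by (auto intro: finite_subset)
    have e: "symdiff (symdiff A B) D = symdiff A (symdiff B D)" by auto
    show "(if symdiff (symdiff A B) D = C then bsign eta A B * bsign eta (symdiff A B) D * f A * g B * h D else 0) =
          (if symdiff A (symdiff B D) = C then bsign eta A (symdiff B D) * bsign eta B D * f A * g B * h D else 0)"
      unfolding e using bsign_cocycle[OF f] by simp
  qed
qed

lemma mul_clalg[simp]: "f \<odot> g \<in> clalg n"
  unfolding clalg_def by (auto simp: mul_apply intro!: sum.neutral)

lemma mul_blade_right_apply:
  assumes "B \<in> Blades"
  shows "(f \<odot> blade B) C = (if C \<in> Blades then bsign eta (symdiff C B) B * f (symdiff C B) else 0)"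
proof -
  have "(f \<odot> blade B) C = (\<Sum>A\<in>Blades. if A = symdiff C B then bsign eta A B * f A else 0)"
    unfolding mul_apply
  proof (rule sum.cong[OF refl])
    fix A assume A: "A \<in> Blades"
    have "(\<Sum>B'\<in>Blades. if symdiff A B' = C then bsign eta A B' * f A * blade B B' else 0)
        = (\<Sum>B'\<in>Blades. if B' = B then (if A = symdiff C B then bsign eta A B * f A else 0) else 0)"
      by (rule sum.cong) (auto simp: blade_apply)
    also have "\<dots> = (if A = symdiff C B then bsign eta A B * f A else 0)" using assms by simp
    finally show "(\<Sum>B'\<in>Blades. if symdiff A B' = C then bsign eta A B' * f A * blade B B' else 0) = \<dots>" .
  qed
  also have "\<dots> = (if symdiff C B \<in> Blades then bsign eta (symdiff C B) B * f (symdiff C B) else 0)"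
    by (rule sum.delta[OF finite_Blades])
  also have "(symdiff C B \<in> Blades) = (C \<in> Blades)" using assms by auto
  finally show ?thesis .
qed

lemma mul_blade_left_apply:
  assumes "B \<in> Blades"
  shows "(blade B \<odot> f) C = (if C \<in> Blades then bsign eta B (symdiff C B) * f (symdiff C B) else 0)"
proof -
  have "(blade B \<odot> f) C = (\<Sum>B'\<in>Blades. if B' = symdiff C B then bsign eta B B' * f B' else 0)"
    unfolding mul_apply
    apply (subst sum.swap)
  proof (rule sum.cong[OF refl])
    fix B' assume "B' \<in> Blades"
    have "(\<Sum>A\<in>Blades. if symdiff A B' = C then bsign eta A B' * blade B A * f B' else 0)
      = (\<Sum>A\<in>Blades. if A = B then (if B' = symdiff C B then bsign eta B B' * f B' else 0) else 0)"
      by (rule sum.cong) (auto simp: blade_apply)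
    also have "\<dots> = (if B' = symdiff C B then bsign eta B B' * f B' else 0)" using assms by simp
    finally show "(\<Sum>A\<in>Blades. if symdiff A B' = C then bsign eta A B' * blade B A * f B' else 0) = \<dots>" .
  qed
  also have "\<dots> = (if symdiff C B \<in> Blades then bsign eta B (symdiff C B) * f (symdiff C B) else 0)"
    by (rule sum.delta[OF finite_Blades])
  also have "(symdiff C B \<in> Blades) = (C \<in> Blades)" using assms by auto
  finally show ?thesis .
qed

lemma bsign_empty_left[simp]: "bsign eta {} B = 1" by (simp add: bsign_def)
lemma bsign_empty_right[simp]: "bsign eta B {} = 1" by (simp add: bsign_def)

lemma clalg_outside: "f \<in> clalg n \<Longrightarrow> C \<notin> Blades \<Longrightarrow> f C = 0"
  by (auto simp: clalg_def)

lemma clone_mul[simp]: "f \<in> clalg n \<Longrightarrow> clone \<odot> f = f"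
  unfolding clone_eq_blade by (rule ext) (auto simp: mul_blade_left_apply clalg_outside)
lemma mul_clone[simp]: "f \<in> clalg n \<Longrightarrow> f \<odot> clone = f"
  unfolding clone_eq_blade by (rule ext) (auto simp: mul_blade_right_apply clalg_outside)

lemma clone_clalg[simp]: "clone \<in> clalg n" by (auto simp: clalg_def clone_def)
lemma blade_clalg[simp]: "B \<in> Blades \<Longrightarrow> blade B \<in> clalg n" by (auto simp: clalg_def blade_def)
lemma cadd_clalg[simp]: "f \<in> clalg n \<Longrightarrow> g \<in> clalg n \<Longrightarrow> f \<oplus> g \<in> clalg n"
  by (auto simp: clalg_def)
lemma scale_clalg[simp]: "f \<in> clalg n \<Longrightarrow> scale c f \<in> clalg n" by (auto simp: clalg_def)

lemma mul_cadd_left: "(f \<oplus> g) \<odot> h = (f \<odot> h) \<oplus> (g \<odot> h)"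
  by (rule ext) (simp add: mul_apply sum.distrib[symmetric] algebra_simps if_distrib cong: if_cong)
lemma mul_cadd_right: "h \<odot> (f \<oplus> g) = (h \<odot> f) \<oplus> (h \<odot> g)"
  by (rule ext) (simp add: mul_apply sum.distrib[symmetric] algebra_simps if_distrib cong: if_cong)
lemma mul_scale_left: "scale c f \<odot> g = scale c (f \<odot> g)"
  by (rule ext) (simp add: mul_apply sum_distrib_left algebra_simps if_distrib cong: if_cong)
lemma mul_scale_right: "g \<odot> scale c f = scale c (g \<odot> f)"
  by (rule ext) (simp add: mul_apply sum_distrib_left algebra_simps if_distrib cong: if_cong)

lemma blade_mul_blade: "A \<in> Blades \<Longrightarrow> B \<in> Blades \<Longrightarrow> blade A \<odot> blade B = scale (bsign eta A B) (blade (symdiff A B))"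
  by (rule ext) (auto simp: mul_blade_right_apply blade_apply)

lemma grade_inv_mul: "grade_inv (f \<odot> g) = grade_inv f \<odot> grade_inv g"
proof
  fix C
  show "grade_inv (f \<odot> g) C = (grade_inv f \<odot> grade_inv g) C"
    unfolding grade_inv_def mul_apply sum_distrib_left
  proof (intro sum.cong refl)
    fix A B assume "A \<in> Blades" "B \<in> Blades"
    hence f: "finite A" "finite B" by (auto intro: finite_subset)
    show "(-1) ^ card C * (if symdiff A B = C then bsign eta A B * f A * g B else 0) =
       (if symdiff A B = C then bsign eta A B * ((-1) ^ card A * f A) * ((-1) ^ card B * g B) else 0)"
      using neg_one_power_card_symdiff[OF f, where 'a='a] by (auto simp: algebra_simps)
  qed
qed

lemma bsign_swap:
  assumes "finite A" "finite B"
  shows "bsign eta B A = (-1) ^ (card A * card B + card (A \<inter> B)) * bsign eta A B"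
proof -
  have "(-1::'a) ^ (card A * card B + card (A \<inter> B)) = (-1) ^ (card (inversions A B) + card (inversions B A) + 2 * card (A \<inter> B))"
  proof -
    have "card A * card B + card (A \<inter> B) = card (inversions A B) + card (inversions B A) + 2 * card (A \<inter> B)"
      using card_inversions_both[OF assms] by linarith
    thus ?thesis by (simp only:)
  qed
  also have "\<dots> = (-1) ^ card (inversions A B) * (-1) ^ card (inversions B A)"
    by (simp add: power_add power_mult)
  finally have e: "(-1::'a) ^ (card A * card B + card (A \<inter> B)) = (-1) ^ card (inversions A B) * (-1) ^ card (inversions B A)" .
  show ?thesis unfolding bsign_eta_prod e
    by (simp add: Int_commute algebra_simps)
qed

lemma bsign_symdiff_reversion:
  assumes "finite A" "finite B"
  shows "(-1) ^ card (inversions (symdiff A B) (symdiff A B)) * bsign eta A B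
       = bsign eta B A * (-1) ^ card (inversions B B) * (-1) ^ card (inversions A A)"
proof -
  have fs: "finite (inversions X Y)" if "X \<in> {A, B}" "Y \<in> {A, B}" for X Y using assms that by auto
  have "inversions (symdiff A B) (symdiff A B) = symdiff (symdiff (inversions A A) (inversions A B)) (symdiff (inversions B A) (inversions B B))"
    by (auto simp: inversions_symdiff_left inversions_symdiff_right)
  hence "(-1::'a) ^ card (inversions (symdiff A B) (symdiff A B)) =
     (-1) ^ card (inversions A A) * (-1) ^ card (inversions A B) * ((-1) ^ card (inversions B A) * (-1) ^ card (inversions B B))"
    using assms by (simp add: neg_one_power_card_symdiff)
  thus ?thesis unfolding bsign_eta_prod using neg_one_power_square[of "card (inversions A B)", where 'a='a]
    by (simp add: Int_commute algebra_simps)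
qed

lemma clrev_mul: "clrev (f \<odot> g) = clrev g \<odot> clrev f"
proof
  fix C
  show "clrev (f \<odot> g) C = (clrev g \<odot> clrev f) C"
  proof (cases "C \<in> Blades")
    case False
    then show ?thesis using mul_clalg[of f g] mul_clalg[of "clrev g" "clrev f"]
      by (simp add: clrev_def clalg_outside)
  next
    case True
    hence fC: "finite C" by (auto intro: finite_subset)
    have "(clrev g \<odot> clrev f) C = (\<Sum>B\<in>Blades. \<Sum>A\<in>Blades. if symdiff A B = C then
        bsign eta B A * ((-1) ^ card (inversions B B) * g B) * ((-1) ^ card (inversions A A) * f A) else 0)"
      unfolding mul_apply
    proof (intro sum.cong refl)
      fix A B assume "A \<in> Blades" "B \<in> Blades"
      hence f: "finite A" "finite B" by (auto intro: finite_subset)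
      show "(if symdiff B A = C then bsign eta B A * clrev g B * clrev f A else 0) =
         (if symdiff A B = C then bsign eta B A * ((-1) ^ card (inversions B B) * g B) * ((-1) ^ card (inversions A A) * f A) else 0)"
        using f by (simp add: clrev_apply_inversions Un_commute)
    qed
    also have "\<dots> = (\<Sum>A\<in>Blades. \<Sum>B\<in>Blades. if symdiff A B = C then
        bsign eta B A * ((-1) ^ card (inversions B B) * g B) * ((-1) ^ card (inversions A A) * f A) else 0)"
      by (rule sum.swap)
    also have "\<dots> = clrev (f \<odot> g) C"
      unfolding clrev_apply_inversions[OF fC] mul_apply sum_distrib_left
    proof (intro sum.cong refl)
      fix A B assume "A \<in> Blades" "B \<in> Blades"
      hence f: "finite A" "finite B" by (auto intro: finite_subset)
      show "(if symdiff A B = C then bsign eta B A * ((-1) ^ card (inversions B B) * g B) * ((-1) ^ card (inversions A A) * f A) else 0)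
        = (-1) ^ card (inversions C C) * (if symdiff A B = C then bsign eta A B * f A * g B else 0)"
        using bsign_symdiff_reversion[OF f] by (auto simp: algebra_simps)
    qed
    finally show ?thesis by simp
  qed
qed

lemma mul_czero[simp]: "f \<odot> czero = czero" by (rule ext) (simp add: mul_apply czero_def cong: if_cong)
lemma czero_mul[simp]: "czero \<odot> f = czero" by (rule ext) (simp add: mul_apply czero_def cong: if_cong)
lemma clone_neq_czero[simp]: "(clone :: nat set \<Rightarrow> 'a) \<noteq> czero"
  by (auto simp: clone_def czero_def fun_eq_iff)

lemma cleven_iff:
  fixes f :: "nat set \<Rightarrow> 'a"
  shows "f \<in> cleven n \<longleftrightarrow> f \<in> clalg n \<and> grade_inv f = f"
proof
  assume h: "f \<in> cleven n"
  have "grade_inv f A = f A" for A using h by (cases "even (card A)") (auto simp: cleven_def grade_inv_def)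
  with h show "f \<in> clalg n \<and> grade_inv f = f" by (auto simp: cleven_def)
next
  assume h: "f \<in> clalg n \<and> grade_inv f = f"
  { fix A :: "nat set" assume "odd (card A)"
    hence "- f A = f A" using fun_cong[OF conjunct2[OF h], of A] by (simp add: grade_inv_def)
    hence "f A = 0" by (simp add: eq_neg_iff_add_eq_0) }
  with h show "f \<in> cleven n" by (auto simp: cleven_def)
qed

lemma clodd_iff:
  fixes f :: "nat set \<Rightarrow> 'a"
  shows "f \<in> clodd n \<longleftrightarrow> f \<in> clalg n \<and> grade_inv f = scale (-1) f"
proof
  assume h: "f \<in> clodd n"
  have "grade_inv f A = scale (-1) f A" for A using h by (cases "even (card A)") (auto simp: clodd_def grade_inv_def)
  with h show "f \<in> clalg n \<and> grade_inv f = scale (-1) f" by (auto simp: clodd_def)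
next
  assume h: "f \<in> clalg n \<and> grade_inv f = scale (-1) f"
  { fix A :: "nat set" assume "even (card A)"
    hence "f A = - f A" using fun_cong[OF conjunct2[OF h], of A] by (simp add: grade_inv_def)
    hence "f A = 0" by (simp add: eq_neg_iff_add_eq_0) }
  with h show "f \<in> clodd n" by (auto simp: clodd_def)
qed

lemma grmod4_iff:
  fixes f :: "nat set \<Rightarrow> 'a"
  assumes k: "k < 4"
  shows "f \<in> grmod4 n k \<longleftrightarrow> f \<in> clalg n \<and> grade_inv f = scale ((-1) ^ k) f \<and> clrev f = scale (rev_sign k) f"
proof
  assume h: "f \<in> grmod4 n k"
  have "grade_inv f A = scale ((-1) ^ k) f A \<and> clrev f A = scale (rev_sign k) f A" for A
  proof (cases "f A = 0")
    case False
    with h have A: "card A mod 4 = k" "A \<in> Blades" by (auto simp: grmod4_def clalg_def)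
    hence fA: "finite A" by (auto intro: finite_subset)
    have "even (card A) \<longleftrightarrow> even k" using A(1) by presburger
    hence e1: "(-1::'a) ^ card A = (-1) ^ k" by (simp add: neg_one_power_eq_iff)
    have e2: "rev_sign (card A) = (rev_sign k :: 'a)" using A(1) k by (simp add: rev_sign_def)
    show ?thesis unfolding grade_inv_def clrev_apply[OF fA] scale_apply e1 e2 by simp
  qed (simp add: grade_inv_def clrev_def)
  with h show "f \<in> clalg n \<and> grade_inv f = scale ((-1) ^ k) f \<and> clrev f = scale (rev_sign k) f"
    by (auto simp: grmod4_def fun_eq_iff)
next
  assume h: "f \<in> clalg n \<and> grade_inv f = scale ((-1) ^ k) f \<and> clrev f = scale (rev_sign k) f"
  { fix A assume nz: "f A \<noteq> 0"
    with h have "A \<in> Blades" by (auto simp: clalg_def)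
    hence fA: "finite A" by (auto intro: finite_subset)
    from h have "(-1) ^ card A * f A = (-1) ^ k * f A" by (auto simp: grade_inv_def fun_eq_iff)
    with nz have 1: "(-1::'a) ^ card A = (-1) ^ k" by simp
    from h have "clrev f A = scale (rev_sign k) f A" by simp
    hence "rev_sign (card A) * f A = rev_sign k * f A" by (simp add: clrev_apply[OF fA])
    with nz have 2: "(rev_sign (card A) :: 'a) = rev_sign k" by simp
    from 1 have p: "even (card A) \<longleftrightarrow> even k" by (simp add: neg_one_power_eq_iff)
    from 2 have q: "card A mod 4 < 2 \<longleftrightarrow> k mod 4 < 2" by (auto simp: rev_sign_def split: if_splits)
    have "card A mod 4 = k" using p q k by presburger
  }
  with h show "f \<in> grmod4 n k" by (auto simp: grmod4_def)
qed

section \<open>Invertible elements\<close>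

lemma invertible_iff: "invertible T \<longleftrightarrow> T \<in> Cl \<and> (\<exists>U\<in>Cl. T \<odot> U = clone \<and> U \<odot> T = clone)"
  by (simp add: invertible_def clunits_def)

lemma left_inverse_eq_right_inverse:
  fixes T U U' :: "nat set \<Rightarrow> 'a"
  assumes "U \<in> Cl" "U' \<in> Cl" "U \<odot> T = clone" "T \<odot> U' = clone"
  shows "U = U'"
proof -
  have "U = U \<odot> (T \<odot> U')" using assms(1,4) by simp
  also have "\<dots> = (U \<odot> T) \<odot> U'" by (rule mul_assoc[symmetric])
  also have "\<dots> = U'" using assms(2,3) by simp
  finally show ?thesis .
qed

lemma cinv_props:
  assumes "invertible T"
  shows "cinv T \<in> Cl" "T \<odot> cinv T = clone" "cinv T \<odot> T = clone"
proof -
  from assms obtain U where U: "U \<in> Cl" "T \<odot> U = clone" "U \<odot> T = clone" by (auto simp: invertible_iff)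
  have "cinv T = U" unfolding clinv_def
    by (rule the_equality) (use U in \<open>auto intro: left_inverse_eq_right_inverse\<close>)
  thus "cinv T \<in> Cl" "T \<odot> cinv T = clone" "cinv T \<odot> T = clone" using U by auto
qed

lemma invertibleD: "invertible T \<Longrightarrow> T \<in> Cl" by (simp add: invertible_iff)

lemma invertibleI: "T \<in> Cl \<Longrightarrow> U \<in> Cl \<Longrightarrow> T \<odot> U = clone \<Longrightarrow> U \<odot> T = clone \<Longrightarrow> invertible T"
  by (auto simp: invertible_iff)

lemma cinv_eq_left: "invertible T \<Longrightarrow> U \<in> Cl \<Longrightarrow> U \<odot> T = clone \<Longrightarrow> cinv T = U"
  using left_inverse_eq_right_inverse[of U "cinv T" T] cinv_props[of T] by auto
lemma cinv_eq_right: "invertible T \<Longrightarrow> U \<in> Cl \<Longrightarrow> T \<odot> U = clone \<Longrightarrow> cinv T = U"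
  using left_inverse_eq_right_inverse[of "cinv T" U T] cinv_props[of T] by auto

lemma invertible_mul:
  assumes "invertible S" "invertible T"
  shows "invertible (S \<odot> T)" "cinv (S \<odot> T) = cinv T \<odot> cinv S"
proof -
  have a: "(S \<odot> T) \<odot> (cinv T \<odot> cinv S) = clone"
    using cinv_props[OF assms(1)] cinv_props[OF assms(2)] invertibleD[OF assms(2)]
    by (simp add: mul_assoc) (simp add: mul_assoc[symmetric])
  have b: "(cinv T \<odot> cinv S) \<odot> (S \<odot> T) = clone"
    using cinv_props[OF assms(1)] cinv_props[OF assms(2)] invertibleD[OF assms(1)]
    by (simp add: mul_assoc) (simp add: mul_assoc[symmetric])
  show u: "invertible (S \<odot> T)" by (rule invertibleI[OF _ _ a b]) auto
  show "cinv (S \<odot> T) = cinv T \<odot> cinv S" by (rule cinv_eq_right[OF u _ a]) simp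
qed

lemma invertible_cinv: assumes "invertible T" shows "invertible (cinv T)" "cinv (cinv T) = T"
proof -
  show u: "invertible (cinv T)" using cinv_props[OF assms] invertibleD[OF assms] by (intro invertibleI) auto
  show "cinv (cinv T) = T" using cinv_props[OF assms] invertibleD[OF assms] by (intro cinv_eq_right[OF u]) auto
qed

lemma invertible_clrev:
  assumes "invertible T"
  shows "invertible (clrev T)" "cinv (clrev T) = clrev (cinv T)"
proof -
  have a: "clrev T \<odot> clrev (cinv T) = clone" using cinv_props[OF assms]
    by (metis clrev_mul clrev_clone)
  have b: "clrev (cinv T) \<odot> clrev T = clone" using cinv_props[OF assms]
    by (metis clrev_mul clrev_clone)
  show u: "invertible (clrev T)" using cinv_props[OF assms] invertibleD[OF assms] a b by (intro invertibleI) auto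
  show "cinv (clrev T) = clrev (cinv T)" using cinv_props[OF assms] a by (intro cinv_eq_right[OF u]) auto
qed

lemma invertible_grade_inv:
  assumes "invertible T"
  shows "invertible (grade_inv T)" "cinv (grade_inv T) = grade_inv (cinv T)"
proof -
  have a: "grade_inv T \<odot> grade_inv (cinv T) = clone" using cinv_props[OF assms]
    by (metis grade_inv_mul grade_inv_clone)
  have b: "grade_inv (cinv T) \<odot> grade_inv T = clone" using cinv_props[OF assms]
    by (metis grade_inv_mul grade_inv_clone)
  show u: "invertible (grade_inv T)" using cinv_props[OF assms] invertibleD[OF assms] a b by (intro invertibleI) auto
  show "cinv (grade_inv T) = grade_inv (cinv T)" using cinv_props[OF assms] a by (intro cinv_eq_right[OF u]) auto
qed

lemma invertible_neq_czero: "invertible T \<Longrightarrow> T \<noteq> czero"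
  using cinv_props(2)[of T] clone_neq_czero by force

lemma invertible_clone[simp]: "invertible clone" by (rule invertibleI[of clone clone]) auto

lemma mul_eq_czero_cancel_right:
  assumes "invertible T" "X \<in> Cl" "X \<odot> T = czero"
  shows "X = czero"
proof -
  have "X = X \<odot> (T \<odot> cinv T)" using cinv_props[OF assms(1)] assms(2) by simp
  also have "\<dots> = czero" by (simp add: mul_assoc[symmetric] assms(3))
  finally show ?thesis .
qed

lemma cinv_cancel:
  assumes "invertible T" "X \<in> Cl"
  shows "cinv T \<odot> (T \<odot> X) = X" "T \<odot> (cinv T \<odot> X) = X"
  "(X \<odot> T) \<odot> cinv T = X" "(X \<odot> cinv T) \<odot> T = X"
  using cinv_props[OF assms(1)] assms(2) by (simp_all add: mul_assoc[symmetric] mul_assoc)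

section \<open>Commutation and conjugation\<close>

lemma Blades_finite: "A \<in> Blades \<Longrightarrow> finite A" by (auto intro: finite_subset)

lemma support_in_Blades: "X \<in> Cl \<Longrightarrow> X A \<noteq> 0 \<Longrightarrow> A \<in> Blades"
  by (auto simp: clalg_def)

lemma bsign_neq_0: "bsign eta A B \<noteq> 0"
proof -
  have "eta_prod (A \<inter> B) \<noteq> 0" using eta_prod_square[of "A \<inter> B"] by auto
  thus ?thesis by (simp add: bsign_eta_prod)
qed

lemma bsign_square: "bsign eta A B * bsign eta A B = 1"
proof -
  have "bsign eta A B * bsign eta A B = ((-1) ^ card (inversions A B) * (-1) ^ card (inversions A B)) * (eta_prod (A \<inter> B) * eta_prod (A \<inter> B))"
    by (simp add: bsign_eta_prod algebra_simps)
  also have "\<dots> = 1" by (simp only: eta_prod_square neg_one_power_square) simp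
  finally show ?thesis .
qed

lemma commute_blade_parity:
  fixes X :: "nat set \<Rightarrow> 'a"
  assumes X: "X \<in> Cl" and B: "B \<in> Blades" and c: "X \<odot> blade B = blade B \<odot> X" and nz: "X A \<noteq> 0"
  shows "even (card A * card B + card (A \<inter> B))"
proof -
  have A: "A \<in> Blades" using support_in_Blades[OF X nz] .
  let ?C = "symdiff A B"
  have C: "?C \<in> Blades" "symdiff ?C B = A" using A B by auto
  have "(X \<odot> blade B) ?C = (blade B \<odot> X) ?C" using c by simp
  hence "bsign eta A B * X A = bsign eta B A * X A"
    unfolding mul_blade_left_apply[OF B] mul_blade_right_apply[OF B] using C by simp
  hence "bsign eta A B * X A = (-1) ^ (card A * card B + card (A \<inter> B)) * (bsign eta A B * X A)"
    using bsign_swap[OF Blades_finite[OF A] Blades_finite[OF B]] by (simp add: algebra_simps)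
  hence "((-1) ^ (card A * card B + card (A \<inter> B)) - 1) * (bsign eta A B * X A) = 0"
    by (simp add: algebra_simps)
  moreover have "bsign eta A B * X A \<noteq> 0" using nz bsign_neq_0 by simp
  ultimately have "(-1::'a) ^ (card A * card B + card (A \<inter> B)) = 1" by simp
  thus ?thesis using neg_one_power_eq_iff[of "card A * card B + card (A \<inter> B)" 0, where 'a='a] by simp
qed

lemma even_part_clalg[simp]: "(f :: nat set \<Rightarrow> 'a) \<in> Cl \<Longrightarrow> even_part f \<in> Cl"
  unfolding clalg_def even_part_def by auto

lemma odd_part_clalg[simp]: "(f :: nat set \<Rightarrow> 'a) \<in> Cl \<Longrightarrow> odd_part f \<in> Cl"
  unfolding clalg_def odd_part_def by auto

lemma clunits_iff: "(X :: nat set \<Rightarrow> 'a) \<in> clunits n eta S \<longleftrightarrow> X \<in> S \<and> invertible X"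
  unfolding clunits_def invertible_iff by auto

lemma scale_eq_czero_imp:
  fixes T :: "nat set \<Rightarrow> 'a"
  shows "scale a T = czero \<Longrightarrow> T \<noteq> czero \<Longrightarrow> a = 0"
  by (auto simp: fun_eq_iff czero_def)

lemma mul_left_commute_if:
  fixes A B Z :: "nat set \<Rightarrow> 'a"
  assumes "A \<odot> B = B \<odot> A" shows "A \<odot> (B \<odot> Z) = B \<odot> (A \<odot> Z)"
  by (simp add: mul_assoc[symmetric] assms)

lemma cinv_commute:
  fixes N X :: "nat set \<Rightarrow> 'a"
  assumes "invertible N" "X \<in> Cl" "N \<odot> X = X \<odot> N" shows "cinv N \<odot> X = X \<odot> cinv N"
proof -
  have "cinv N \<odot> X = cinv N \<odot> (X \<odot> N) \<odot> cinv N"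
    using cinv_cancel[OF assms(1,2)] by (simp add: mul_assoc)
  also have "\<dots> = X \<odot> cinv N" using assms(3) cinv_cancel[OF assms(1,2)] by (simp add: mul_assoc[symmetric])
  finally show ?thesis .
qed

lemma conj_eq_imp_commute:
  fixes A B X :: "nat set \<Rightarrow> 'a"
  assumes A: "invertible A" and B: "invertible B" and X: "X \<in> Cl"
    and e: "A \<odot> X \<odot> cinv A = B \<odot> X \<odot> cinv B"
  shows "(cinv B \<odot> A) \<odot> X = X \<odot> (cinv B \<odot> A)"
proof -
  have "(cinv B \<odot> A) \<odot> X = cinv B \<odot> (A \<odot> X \<odot> cinv A) \<odot> A"
    using cinv_cancel[OF A X] by (simp add: mul_assoc)
  also have "\<dots> = cinv B \<odot> (B \<odot> X \<odot> cinv B) \<odot> A" by (simp only: e)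
  also have "\<dots> = X \<odot> (cinv B \<odot> A)" using cinv_cancel[OF B X] by (simp add: mul_assoc[symmetric])
  finally show ?thesis .
qed

lemma Gamma_invertible: "T \<in> Gamma n eta k \<Longrightarrow> invertible T" by (simp add: Gamma_def invertible_def)

lemma grmod4_clalg: "X \<in> grmod4 n k \<Longrightarrow> X \<in> Cl" by (simp add: grmod4_def)

lemma Gamma_norm_commute:
  fixes T X :: "nat set \<Rightarrow> 'a"
  assumes k: "k < 4" and T: "T \<in> Gamma n eta k" and X: "X \<in> grmod4 n k"
  shows "(clrev T \<odot> T) \<odot> X = X \<odot> (clrev T \<odot> T)"
proof -
  have u: "invertible T" using T by (rule Gamma_invertible)
  have XC: "X \<in> Cl" using X by (rule grmod4_clalg)
  have Y: "T \<odot> X \<odot> cinv T \<in> grmod4 n k" using T X by (auto simp: Gamma_def)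
  have ur: "invertible (clrev T)" "cinv (clrev T) = clrev (cinv T)" using invertible_clrev[OF u] .
  have uir: "invertible (cinv (clrev T))" "cinv (cinv (clrev T)) = clrev T" using invertible_cinv[OF ur(1)] .
  have uN: "invertible (clrev T \<odot> T)" using invertible_mul(1)[OF ur(1) u] .
  have "clrev (T \<odot> X \<odot> cinv T) = scale (rev_sign k) (cinv (clrev T) \<odot> X \<odot> clrev T)"
    using X ur(2) by (simp add: grmod4_iff[OF k] clrev_mul mul_scale_left mul_scale_right mul_assoc)
  hence "scale (rev_sign k) (scale (rev_sign k) (cinv (clrev T) \<odot> X \<odot> clrev T))
      = scale (rev_sign k) (scale (rev_sign k) (T \<odot> X \<odot> cinv T))"
    using Y by (simp add: grmod4_iff[OF k])
  hence "cinv (clrev T) \<odot> X \<odot> cinv (cinv (clrev T)) = T \<odot> X \<odot> cinv T" using uir(2) by simp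
  hence "(cinv T \<odot> cinv (clrev T)) \<odot> X = X \<odot> (cinv T \<odot> cinv (clrev T))"
    by (rule conj_eq_imp_commute[OF uir(1) u XC])
  hence "cinv (clrev T \<odot> T) \<odot> X = X \<odot> cinv (clrev T \<odot> T)" using invertible_mul[OF ur(1) u] by simp
  from cinv_commute[OF invertible_cinv(1)[OF uN] XC this] show ?thesis
    using invertible_cinv(2)[OF uN] by simp
qed

lemma Gamma_grade_inv_quotient_commute:
  fixes T X :: "nat set \<Rightarrow> 'a"
  assumes k: "k < 4" and T: "T \<in> Gamma n eta k" and X: "X \<in> grmod4 n k"
  shows "(cinv T \<odot> grade_inv T) \<odot> X = X \<odot> (cinv T \<odot> grade_inv T)"
proof -
  have u: "invertible T" using T by (rule Gamma_invertible)
  have Y: "T \<odot> X \<odot> cinv T \<in> grmod4 n k" using T X by (auto simp: Gamma_def)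
  have ua: "invertible (grade_inv T)" "cinv (grade_inv T) = grade_inv (cinv T)" using invertible_grade_inv[OF u] .
  have "grade_inv (T \<odot> X \<odot> cinv T) = scale ((-1)^k) (grade_inv T \<odot> X \<odot> cinv (grade_inv T))"
    using X ua(2) by (simp add: grmod4_iff[OF k] grade_inv_mul mul_scale_left mul_scale_right mul_assoc)
  hence "scale ((-1)^k) (scale ((-1)^k) (grade_inv T \<odot> X \<odot> cinv (grade_inv T)))
      = scale ((-1)^k) (scale ((-1)^k) (T \<odot> X \<odot> cinv T))"
    using Y by (simp add: grmod4_iff[OF k])
  hence "grade_inv T \<odot> X \<odot> cinv (grade_inv T) = T \<odot> X \<odot> cinv T" by (simp flip: power_add)
  thus ?thesis by (rule conj_eq_imp_commute[OF ua(1) u grmod4_clalg[OF X]])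
qed

lemma even_part_cleven: "(f :: nat set \<Rightarrow> 'a) \<in> Cl \<Longrightarrow> even_part f \<in> cleven n"
  unfolding cleven_def even_part_def clalg_def by auto

lemma even_part_cadd: "even_part (f \<oplus> g) = even_part f \<oplus> (even_part g :: nat set \<Rightarrow> 'a)"
  by (rule ext) (simp add: even_part_def)

lemma even_part_scale: "even_part (scale c f) = scale c (even_part f :: nat set \<Rightarrow> 'a)"
  by (rule ext) (simp add: even_part_def)

lemma even_part_grade_inv: "even_part (grade_inv f) = (even_part f :: nat set \<Rightarrow> 'a)"
  by (rule ext) (simp add: even_part_def grade_inv_def)

lemma homogeneous_if_grade_inv_scale:
  fixes T :: "nat set \<Rightarrow> 'a"
  assumes u: "invertible T" and e: "grade_inv T = scale c T"
  shows "T \<in> cleven n \<or> T \<in> clodd n"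
proof -
  have "T = grade_inv (grade_inv T)" by simp
  also have "\<dots> = scale (c * c) T" by (simp only: e grade_inv_scale scale_scale)
  finally have ee: "T = scale (c * c) T" .
  have "scale (c * c - 1) T = czero"
  proof
    fix A have "T A = c * c * T A" using fun_cong[OF ee, of A] by simp
    thus "scale (c * c - 1) T A = czero A" by (simp add: czero_def algebra_simps)
  qed
  hence "c * c - 1 = 0" using invertible_neq_czero[OF u] scale_eq_czero_imp by blast
  hence "(c - 1) * (c + 1) = 0" by (simp add: algebra_simps)
  hence "c = 1 \<or> c = -1" by (auto simp: eq_neg_iff_add_eq_0)
  thus ?thesis using e invertibleD[OF u] by (auto simp: cleven_iff clodd_iff)
qed

lemma invertible_factors_if_commute:
  fixes A B :: "nat set \<Rightarrow> 'a"
  assumes AB: "invertible (A \<odot> B)" and A: "A \<in> Cl" and B: "B \<in> Cl" and comm: "A \<odot> B = B \<odot> A"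
  shows "invertible A" "invertible B"
proof -
  define U where "U = cinv (A \<odot> B)"
  have U: "U \<in> Cl" "A \<odot> B \<odot> U = clone" "U \<odot> (A \<odot> B) = clone"
    using cinv_props[OF AB] by (simp_all add: U_def)
  have UA: "U \<odot> A = A \<odot> U" unfolding U_def by (rule cinv_commute[OF AB A]) (simp add: mul_assoc flip: comm)
  show "invertible A"
  proof (rule invertibleI[OF A, of "B \<odot> U"])
    show "A \<odot> (B \<odot> U) = clone" using U by (simp add: mul_assoc)
    show "B \<odot> U \<odot> A = clone" using U UA comm by (simp add: mul_assoc)
  qed simp
  show "invertible B"
  proof (rule invertibleI[OF B, of "U \<odot> A"])
    show "B \<odot> (U \<odot> A) = clone" using U UA comm by (simp add: mul_assoc)
    show "U \<odot> A \<odot> B = clone" using U by (simp add: mul_assoc)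
  qed simp
qed

lemma conj_homogeneous_grmod4:
  fixes S X :: "nat set \<Rightarrow> 'a"
  assumes u: "invertible S" and sg: "grade_inv S = scale \<sigma> S" "\<sigma> * \<sigma> = 1" and k: "k < 4" and X: "X \<in> grmod4 n k"
   and NX: "(clrev S \<odot> S) \<odot> X = X \<odot> (clrev S \<odot> S)"
  shows "S \<odot> X \<odot> cinv S \<in> grmod4 n k"
proof -
  define N where "N = clrev S \<odot> S"
  have SC: "S \<in> Cl" using invertibleD[OF u] .
  have XC: "X \<in> Cl" using X by (rule grmod4_clalg)
  note Xi = X[unfolded grmod4_iff[OF k]]
  have uN: "invertible N" unfolding N_def by (rule invertible_mul(1)[OF invertible_clrev(1)[OF u] u])
  have iNC: "cinv N \<in> Cl" using cinv_props[OF uN] by simp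
  have iS: "cinv S = cinv N \<odot> clrev S"
  proof (rule cinv_eq_left[OF u])
    show "cinv N \<odot> clrev S \<in> Cl" by simp
    show "cinv N \<odot> clrev S \<odot> S = clone" using cinv_props(3)[OF uN] by (simp add: N_def mul_assoc)
  qed
  have cN: "cinv N \<odot> X = X \<odot> cinv N" using cinv_commute[OF uN XC] NX by (simp add: N_def)
  have gN: "grade_inv N = N" unfolding N_def using sg
    by (simp add: grade_inv_mul grade_inv_clrev mul_scale_left mul_scale_right)
  have gN': "grade_inv (cinv N) = cinv N" using invertible_grade_inv(2)[OF uN] gN by simp
  have rN: "clrev N = N" unfolding N_def by (simp add: clrev_mul)
  have rN': "clrev (cinv N) = cinv N" using invertible_clrev(2)[OF uN] rN by simp
  define Y where "Y = S \<odot> X \<odot> (cinv N \<odot> clrev S)"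
  have "grade_inv Y = scale (\<sigma> * (-1)^k * \<sigma>) Y"
    unfolding Y_def using Xi sg gN'
    by (simp add: grade_inv_mul grade_inv_clrev mul_scale_left mul_scale_right mul_assoc)
  moreover have "\<sigma> * (-1)^k * \<sigma> = (-1::'a)^k" using sg(2) by (simp add: algebra_simps)
  ultimately have gY: "grade_inv Y = scale ((-1)^k) Y" by simp
  have "clrev Y = scale (rev_sign k) (S \<odot> (cinv N \<odot> (X \<odot> clrev S)))"
    unfolding Y_def using Xi rN'
    by (simp add: clrev_mul mul_scale_left mul_scale_right mul_assoc)
  also have "S \<odot> (cinv N \<odot> (X \<odot> clrev S)) = Y"
    unfolding Y_def using mul_left_commute_if[OF cN, of "clrev S"] by (simp add: mul_assoc)
  finally have rY: "clrev Y = scale (rev_sign k) Y" .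
  have "Y \<in> grmod4 n k" unfolding grmod4_iff[OF k] using gY rY by (simp add: Y_def)
  thus ?thesis using iS by (simp add: Y_def)
qed

lemma homogeneous_grade_inv_sign:
  assumes "S \<in> cleven n \<or> S \<in> clodd n"
  obtains \<sigma> :: 'a where "grade_inv S = scale \<sigma> S" "\<sigma> * \<sigma> = 1"
  using assms
proof
  assume "S \<in> cleven n" thus ?thesis by (intro that[of 1]) (simp_all add: cleven_iff)
next
  assume "S \<in> clodd n" thus ?thesis by (intro that[of "-1"]) (simp_all add: clodd_iff)
qed

lemma Gamma_iff: "T \<in> Gamma n eta k \<longleftrightarrow> invertible T \<and> (\<forall>X\<in>grmod4 n k. T \<odot> X \<odot> cinv T \<in> grmod4 n k)"
  by (simp add: Gamma_def invertible_def)

lemma blade_grmod4: "B \<in> Blades \<Longrightarrow> card B mod 4 = k \<Longrightarrow> (blade B :: nat set \<Rightarrow> 'a) \<in> grmod4 n k"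
  using blade_clalg[of B] unfolding grmod4_def by (auto simp: blade_def)

lemma grmod4_cleven: "k \<in> {0, 2} \<Longrightarrow> X \<in> grmod4 n k \<Longrightarrow> (X :: nat set \<Rightarrow> 'a) \<in> cleven n"
proof -
  assume k: "k \<in> {0, 2}" and X: "X \<in> grmod4 n k"
  { fix A :: "nat set" assume "odd (card A)"
    hence "card A mod 4 \<noteq> k" using k by auto presburger+
    hence "X A = 0" using X by (simp add: grmod4_def) }
  thus ?thesis using X by (simp add: grmod4_def cleven_def)
qed

lemma norm_grmod4_0:
  fixes T :: "nat set \<Rightarrow> 'a"
  assumes "T \<in> cleven n \<or> T \<in> clodd n" shows "clrev T \<odot> T \<in> grmod4 n 0"
proof -
  have "grade_inv (clrev T \<odot> T) = clrev T \<odot> T" using assms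
    by (auto simp: cleven_iff clodd_iff grade_inv_mul grade_inv_clrev mul_scale_left mul_scale_right)
  moreover have "(0::nat) < 4" by simp
  ultimately show ?thesis unfolding grmod4_iff[OF \<open>(0::nat) < 4\<close>] by (simp add: clrev_mul rev_sign_def)
qed

lemma Blades_card_le: "A \<in> Blades \<Longrightarrow> card A \<le> n"
  using card_mono[of "{..<n}" A] by auto

lemma Blades_card_eq_top: "A \<in> Blades \<Longrightarrow> card A = n \<Longrightarrow> A = {..<n}"
  by (intro card_subset_eq) auto

lemma Gamma_eq_clunits_if_fixed:
  assumes "\<And>X T. X \<in> grmod4 n k \<Longrightarrow> invertible T \<Longrightarrow> T \<odot> X \<odot> cinv T = (X :: nat set \<Rightarrow> 'a)"
  shows "Gamma n eta k = clunits n eta Cl"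
  using assms by (auto simp: Gamma_iff invertible_def)

lemma blade_span_mul:
  assumes B: "B \<in> Blades"
  shows "(scale a clone \<oplus> scale b (blade B)) \<odot> (scale c clone \<oplus> scale d (blade B)) =
     scale (a * c + b * d * bsign eta B B) clone \<oplus> scale (a * d + b * c) (blade B :: nat set \<Rightarrow> 'a)"
  using B
  apply (simp add: mul_cadd_left mul_cadd_right mul_scale_left mul_scale_right blade_mul_blade clone_eq_blade[symmetric])
  apply (rule ext)
  apply (simp add: algebra_simps)
  done

lemma even_part_cleven_id: "X \<in> cleven n \<Longrightarrow> even_part X = (X :: nat set \<Rightarrow> 'a)"
  by (rule ext) (auto simp: cleven_def even_part_def)

section \<open>The pseudoscalar and the centre\<close>

lemma top_in_Blades[simp]: "{..<n} \<in> Blades" by simp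

lemma pscalar_commute_odd:
  assumes "odd n" "Y \<in> Cl" shows "pscalar \<odot> Y = Y \<odot> pscalar"
proof
  fix C
  show "(pscalar \<odot> Y) C = (Y \<odot> pscalar) C"
  proof (cases "C \<in> Blades")
    case True
    hence CP: "C \<subseteq> {..<n}" by simp
    let ?D = "symdiff C {..<n}"
    have D: "?D \<in> Blades" using CP by auto
    have "bsign eta {..<n} ?D = bsign eta ?D {..<n}"
    proof -
      have "?D \<inter> {..<n} = ?D" using CP by auto
      hence "bsign eta {..<n} ?D = (-1) ^ (card ?D * (n + 1)) * bsign eta ?D {..<n}"
        using bsign_swap[OF Blades_finite[OF D] Blades_finite[OF top_in_Blades]] by (simp add: algebra_simps)
      moreover have "even (card ?D * (n + 1))" using assms by simp
      ultimately show ?thesis by simp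
    qed
    thus ?thesis unfolding mul_blade_left_apply[OF top_in_Blades] mul_blade_right_apply[OF top_in_Blades] by simp
  qed (simp add: mul_blade_left_apply mul_blade_right_apply)
qed

lemma pscalar_commute_even:
  assumes "even n" shows "Y \<odot> pscalar = pscalar \<odot> grade_inv Y"
proof
  fix C
  show "(Y \<odot> pscalar) C = (pscalar \<odot> grade_inv Y) C"
  proof (cases "C \<in> Blades")
    case True
    hence CP: "C \<subseteq> {..<n}" by simp
    let ?D = "symdiff C {..<n}"
    have D: "?D \<in> Blades" using CP by auto
    have "bsign eta {..<n} ?D * (-1) ^ card ?D = bsign eta ?D {..<n}"
    proof -
      have "?D \<inter> {..<n} = ?D" using CP by auto
      hence "bsign eta {..<n} ?D = (-1) ^ (card ?D * n + card ?D) * bsign eta ?D {..<n}"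
        using bsign_swap[OF Blades_finite[OF D] Blades_finite[OF top_in_Blades]] by (simp add: algebra_simps)
      moreover have "(-1::'a) ^ (card ?D * n + card ?D) = (-1) ^ card ?D"
      proof -
        have e: "(-1::'a) ^ (card ?D * n) = 1" by (rule neg_one_even_power) (use assms in simp)
        show ?thesis unfolding power_add e by simp
      qed
      ultimately show ?thesis by (simp add: algebra_simps flip: power_add)
    qed
    thus ?thesis unfolding mul_blade_left_apply[OF top_in_Blades] mul_blade_right_apply[OF top_in_Blades] grade_inv_def
      by (simp add: algebra_simps)
  qed (simp add: mul_blade_left_apply mul_blade_right_apply)
qed

lemma pscalar_square: "pscalar \<odot> pscalar = scale (bsign eta {..<n} {..<n}) clone"
  by (simp add: blade_mul_blade clone_eq_blade)

definition pscalar_sign :: 'a where "pscalar_sign = bsign eta {..<n} {..<n}"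

lemma pscalar_sign_square: "pscalar_sign * pscalar_sign = 1" by (simp add: pscalar_sign_def bsign_square)

lemma pscalar_sign_neq_0: "pscalar_sign \<noteq> 0" using pscalar_sign_square by auto

lemma invertible_pscalar: "invertible pscalar" "cinv pscalar = scale pscalar_sign pscalar"
proof -
  have a: "pscalar \<odot> scale pscalar_sign pscalar = clone"
    using pscalar_square pscalar_sign_square by (simp add: mul_scale_right pscalar_sign_def)
  have b: "scale pscalar_sign pscalar \<odot> pscalar = clone"
    using pscalar_square pscalar_sign_square by (simp add: mul_scale_left pscalar_sign_def)
  show u: "invertible pscalar" using a b by (intro invertibleI) auto
  show "cinv pscalar = scale pscalar_sign pscalar" using a by (intro cinv_eq_right[OF u]) auto
qed

end

locale clifford_ge2 = clifford + assumes n_ge_2: "n \<ge> 2"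
begin

definition span1I :: "(nat set \<Rightarrow> 'a) \<Rightarrow> bool" where
  "span1I X \<longleftrightarrow> X \<in> Cl \<and> (\<forall>A. X A \<noteq> 0 \<longrightarrow> A = {} \<or> A = {..<n})"

lemma top_nonempty: "{..<n} \<noteq> {}"
proof -
  have "0 \<in> {..<n}" using n_ge_2 by simp
  thus ?thesis by blast
qed

lemma grade0_iff: "X \<in> grade n 0 \<longleftrightarrow> X \<in> Cl \<and> (\<forall>A. X A \<noteq> 0 \<longrightarrow> A = {})"
proof
  assume h: "X \<in> grade n 0"
  { fix A assume nz: "X A \<noteq> 0"
    hence "A \<in> Blades" "card A = 0" using h support_in_Blades by (auto simp: grade_def)
    hence "A = {}" using Blades_finite by simp }
  with h show "X \<in> Cl \<and> (\<forall>A. X A \<noteq> 0 \<longrightarrow> A = {})" by (simp add: grade_def)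
next
  assume h: "X \<in> Cl \<and> (\<forall>A. X A \<noteq> 0 \<longrightarrow> A = {})"
  thus "X \<in> grade n 0" unfolding grade_def by force
qed

lemma grade_top_iff: "X \<in> grade n n \<longleftrightarrow> X \<in> Cl \<and> (\<forall>A. X A \<noteq> 0 \<longrightarrow> A = {..<n})"
proof
  assume h: "X \<in> grade n n"
  { fix A assume nz: "X A \<noteq> 0"
    hence "A \<in> Blades" "card A = n" using h support_in_Blades by (auto simp: grade_def)
    hence "A = {..<n}" by (intro card_subset_eq) auto }
  with h show "X \<in> Cl \<and> (\<forall>A. X A \<noteq> 0 \<longrightarrow> A = {..<n})" by (simp add: grade_def)
next
  assume h: "X \<in> Cl \<and> (\<forall>A. X A \<noteq> 0 \<longrightarrow> A = {..<n})"
  thus "X \<in> grade n n" unfolding grade_def by force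
qed

lemma ssum_grade_0_top_iff: "X \<in> ssum (grade n 0) (grade n n) \<longleftrightarrow> span1I X"
proof
  assume "X \<in> ssum (grade n 0) (grade n n)"
  then obtain x y where X: "X = (\<lambda>A. x A + y A)" and x: "x \<in> grade n 0" and y: "y \<in> grade n n"
    unfolding ssum_def by blast
  have xx: "x \<in> Cl" "\<And>A. x A \<noteq> 0 \<Longrightarrow> A = {}" using x unfolding grade0_iff by auto
  have yy: "y \<in> Cl" "\<And>A. y A \<noteq> 0 \<Longrightarrow> A = {..<n}" using y unfolding grade_top_iff by auto
  have "X = x \<oplus> y" unfolding X cadd_def ..
  hence "X \<in> Cl" using xx yy by simp
  moreover have "X A \<noteq> 0 \<Longrightarrow> A = {} \<or> A = {..<n}" for A
  proof -
    assume "X A \<noteq> 0"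
    hence "x A \<noteq> 0 \<or> y A \<noteq> 0" unfolding X by auto
    thus ?thesis using xx yy by blast
  qed
  ultimately show "span1I X" unfolding span1I_def by blast
next
  assume Z: "span1I X"
  let ?x = "\<lambda>A. if A = {} then X A else 0" and ?y = "\<lambda>A. if A = {..<n} then X A else 0"
  have Z1: "X \<in> Cl" and Z2: "\<And>A. X A \<noteq> 0 \<Longrightarrow> A = {} \<or> A = {..<n}"
    using Z unfolding span1I_def by auto
  have e1: "X = (\<lambda>A. ?x A + ?y A)"
  proof
    fix A show "X A = ?x A + ?y A" using Z2[of A] top_nonempty by (cases "X A = 0") auto
  qed
  have "?x \<in> Cl" "?y \<in> Cl" using Z1 by (auto simp: clalg_def)
  hence g: "?x \<in> grade n 0" "?y \<in> grade n n" unfolding grade0_iff grade_top_iff by auto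
  have "\<exists>x y. X = (\<lambda>A. x A + y A) \<and> x \<in> grade n 0 \<and> y \<in> grade n n"
    by (rule exI[of _ ?x], rule exI[of _ ?y]) (use e1 g in blast)
  thus "X \<in> ssum (grade n 0) (grade n n)" unfolding ssum_def by simp
qed

lemma clcenter_iff: "X \<in> clcenter n \<longleftrightarrow> span1I X \<and> (even n \<longrightarrow> X {..<n} = 0)"
proof (cases "even n")
  case True
  have "X \<in> grade n 0 \<longleftrightarrow> span1I X \<and> X {..<n} = 0"
    unfolding grade0_iff span1I_def using top_nonempty by metis
  thus ?thesis using True by (simp add: clcenter_def)
next
  case False
  thus ?thesis by (simp add: clcenter_def ssum_grade_0_top_iff)
qed

lemma span1I_decomp: "span1I X \<Longrightarrow> X = scale (X {}) clone \<oplus> scale (X {..<n}) pscalar"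
proof
  fix A assume "span1I X"
  thus "X A = (scale (X {}) clone \<oplus> scale (X {..<n}) pscalar) A"
    using top_nonempty unfolding span1I_def by (cases "X A = 0") (auto simp: clone_def blade_def)
qed

lemma span1I_combination: "span1I (scale a clone \<oplus> scale b pscalar)"
proof -
  have "scale a clone \<oplus> scale b pscalar \<in> Cl" by simp
  thus ?thesis unfolding span1I_def using top_nonempty by (auto simp: clone_def blade_def)
qed

lemma span1I_coeffs: "(scale a clone \<oplus> scale b pscalar) {} = a" "(scale a clone \<oplus> scale b pscalar) {..<n} = b"
  using top_nonempty by (auto simp: clone_def blade_def)

lemma span1I_mul:
  "(scale a clone \<oplus> scale b pscalar) \<odot> (scale c clone \<oplus> scale d pscalar)
    = scale (a * c + b * d * pscalar_sign) clone \<oplus> scale (a * d + b * c) pscalar"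
  apply (simp add: mul_cadd_left mul_cadd_right mul_scale_left mul_scale_right pscalar_square)
  apply (rule ext)
  apply (simp add: pscalar_sign_def algebra_simps)
  done

lemma clcenter_commute: assumes "X \<in> clcenter n" "Y \<in> Cl" shows "X \<odot> Y = Y \<odot> X"
proof -
  have Z: "span1I X" and e: "even n \<longrightarrow> X {..<n} = 0" using assms(1) by (auto simp: clcenter_iff)
  have "X \<odot> Y = scale (X {}) Y \<oplus> scale (X {..<n}) (pscalar \<odot> Y)"
    by (subst span1I_decomp[OF Z]) (simp add: mul_cadd_left mul_scale_left assms(2))
  also have "\<dots> = scale (X {}) Y \<oplus> scale (X {..<n}) (Y \<odot> pscalar)"
    using e pscalar_commute_odd[OF _ assms(2)] by (cases "even n") auto
  also have "\<dots> = Y \<odot> X"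
    by (subst (2) span1I_decomp[OF Z]) (simp add: mul_cadd_right mul_scale_right assms(2))
  finally show ?thesis .
qed

lemma commute_blades_support_trivial:
  fixes X :: "nat set \<Rightarrow> 'a"
  assumes m: "1 \<le> m" "m < n" and X: "X \<in> Cl"
    and c: "\<And>B. B \<in> Blades \<Longrightarrow> card B = m \<Longrightarrow> X \<odot> blade B = blade B \<odot> X" and nz: "X A \<noteq> 0"
  shows "A = {} \<or> A = {..<n}"
proof (rule ccontr)
  assume "\<not> (A = {} \<or> A = {..<n})"
  moreover have A: "A \<in> Blades" using support_in_Blades[OF X nz] .
  ultimately obtain a b where a: "a \<in> A" and b: "b < n" "b \<notin> A" by auto
  have par: "even (card A * m + card (A \<inter> B))" if "B \<in> Blades" "card B = m" for B
    using commute_blade_parity[OF X that(1) c[OF that] nz] that(2) by simp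
  have an: "a < n" using a A by auto
  let ?R = "{..<n} - {a, b}"
  have "a \<noteq> b" using a b by auto
  hence "card ?R = n - 2" using b an by (simp add: card_Diff_subset)
  hence "m - 1 \<le> card ?R" using m by linarith
  then obtain S where S: "S \<subseteq> ?R" "card S = m - 1" "finite S"
    using obtain_subset_with_card_n[of "m - 1" ?R] by blast
  \<comment> \<open>Two blades of grade m differing only in a \<in> A versus b \<notin> A meet A with opposite parities.\<close>
  have aS: "a \<notin> S" and "b \<notin> S" using S by auto
  hence "insert b S \<in> Blades" "card (insert b S) = m" "insert a S \<in> Blades" "card (insert a S) = m"
    using S b an m by auto
  moreover have "A \<inter> insert b S = A \<inter> S" using b by auto
  moreover have "card (A \<inter> insert a S) = card (A \<inter> S) + 1"
  proof -
    have "A \<inter> insert a S = insert a (A \<inter> S)" using a by auto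
    thus ?thesis using aS S by simp
  qed
  ultimately have "even (card A * m + card (A \<inter> S))" "even (card A * m + card (A \<inter> S) + 1)"
    using par[of "insert b S"] par[of "insert a S"] by simp_all
  thus False by simp
qed

lemma commute_blades_support:
  fixes X :: "nat set \<Rightarrow> 'a"
  assumes m: "1 \<le> m" "m < n" and X: "X \<in> Cl"
    and c: "\<And>B. B \<in> Blades \<Longrightarrow> card B = m \<Longrightarrow> X \<odot> blade B = blade B \<odot> X" and nz: "X A \<noteq> 0"
  shows "A = {} \<or> (A = {..<n} \<and> even (m * (n + 1)))"
proof -
  have "even (m * (n + 1))" if An: "A = {..<n}"
  proof -
    obtain B where B: "B \<subseteq> {..<n}" "card B = m"
      using obtain_subset_with_card_n[of m "{..<n}"] m by auto
    have "even (card A * card B + card (A \<inter> B))"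
      using commute_blade_parity[OF X _ c nz] B by simp
    moreover have "A \<inter> B = B" using An B by auto
    ultimately show ?thesis using An B by (simp add: algebra_simps)
  qed
  thus ?thesis using commute_blades_support_trivial[OF m X c nz] by blast
qed

lemma commute_generators_clcenter:
  fixes X :: "nat set \<Rightarrow> 'a"
  assumes X: "X \<in> Cl" and c: "\<And>i. i < n \<Longrightarrow> X \<odot> blade {i} = blade {i} \<odot> X"
  shows "X \<in> clcenter n"
proof -
  have c': "X \<odot> blade B = blade B \<odot> X" if "B \<in> Blades" "card B = 1" for B
  proof -
    from that obtain i where "B = {i}" by (auto simp: card_Suc_eq)
    thus ?thesis using c that by auto
  qed
  have h: "X A = 0 \<or> A = {} \<or> (A = {..<n} \<and> odd n)" for A
    using commute_blades_support[of 1 X A, OF _ _ X c'] n_ge_2 by auto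
  show ?thesis unfolding clcenter_iff span1I_def using X h top_nonempty by auto
qed

lemma clcenter_clalg: "(X :: nat set \<Rightarrow> 'a) \<in> clcenter n \<Longrightarrow> X \<in> Cl"
  by (simp add: clcenter_iff span1I_def)

lemma commute_all_clcenter: "(X :: nat set \<Rightarrow> 'a) \<in> Cl \<Longrightarrow> (\<And>Y. Y \<in> Cl \<Longrightarrow> X \<odot> Y = Y \<odot> X) \<Longrightarrow> X \<in> clcenter n"
  by (rule commute_generators_clcenter) auto

lemma clcenter_mul:
  fixes X Y :: "nat set \<Rightarrow> 'a"
  assumes "X \<in> clcenter n" "Y \<in> clcenter n"
  shows "X \<odot> Y \<in> clcenter n"
proof (rule commute_all_clcenter)
  fix Z :: "nat set \<Rightarrow> 'a" assume Z: "Z \<in> Cl"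
  have "X \<odot> Y \<odot> Z = X \<odot> (Z \<odot> Y)" using clcenter_commute[OF assms(2) Z] by (simp add: mul_assoc)
  also have "\<dots> = Z \<odot> (X \<odot> Y)"
    using clcenter_commute[OF assms(1) Z] clcenter_commute[OF assms(1)] by (simp add: mul_assoc[symmetric])
  finally show "X \<odot> Y \<odot> Z = Z \<odot> (X \<odot> Y)" .
qed simp

lemma clcenter_cinv:
  fixes X :: "nat set \<Rightarrow> 'a"
  assumes "X \<in> clcenter n" "invertible X"
  shows "cinv X \<in> clcenter n"
proof (rule commute_all_clcenter)
  show "cinv X \<in> Cl" using cinv_props[OF assms(2)] by simp
  fix Z :: "nat set \<Rightarrow> 'a" assume Z: "Z \<in> Cl"
  have "cinv X \<odot> Z = cinv X \<odot> (Z \<odot> X) \<odot> cinv X"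
    using cinv_cancel[OF assms(2) Z] by (simp add: mul_assoc)
  also have "\<dots> = cinv X \<odot> (X \<odot> Z) \<odot> cinv X" using clcenter_commute[OF assms(1) Z] by simp
  also have "\<dots> = Z \<odot> cinv X" using cinv_cancel[OF assms(2) Z] by (simp add: mul_assoc[symmetric])
  finally show "cinv X \<odot> Z = Z \<odot> cinv X" .
qed

lemma clcenter_clrev: "(X :: nat set \<Rightarrow> 'a) \<in> clcenter n \<Longrightarrow> clrev X \<in> clcenter n"
  using clrev_clalg[of X] clcenter_clalg[of X] unfolding clcenter_iff span1I_def by (auto simp: clrev_def)

lemma clone_clcenter[simp]: "(clone :: nat set \<Rightarrow> 'a) \<in> clcenter n"
  using clone_clalg top_nonempty unfolding clcenter_iff span1I_def by (auto simp: clone_def)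

lemma clunits_clcenter_iff: "(X :: nat set \<Rightarrow> 'a) \<in> clunits n eta (clcenter n) \<longleftrightarrow> X \<in> clcenter n \<and> invertible X"
  unfolding clunits_def invertible_iff by auto

section \<open>Factoring into central and homogeneous parts\<close>

lemma even_part_mul_pscalar:
  fixes f :: "nat set \<Rightarrow> 'a"
  assumes "odd n" shows "even_part (f \<odot> pscalar) = odd_part f \<odot> pscalar"
proof
  fix C
  show "even_part (f \<odot> pscalar) C = (odd_part f \<odot> pscalar) C"
  proof (cases "C \<in> Blades")
    case True
    hence CP: "C \<subseteq> {..<n}" by simp
    have "symdiff C {..<n} = {..<n} - C" using CP by auto
    moreover have "card ({..<n} - C) = n - card C" using CP by (simp add: card_Diff_subset finite_subset)
    moreover have "card C \<le> n" using card_mono[OF finite_lessThan CP] by simp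
    ultimately have "even (card C) \<longleftrightarrow> odd (card (symdiff C {..<n}))" using assms by auto
    thus ?thesis unfolding even_part_def odd_part_def mul_blade_right_apply[OF top_in_Blades] using True by auto
  qed (simp add: even_part_def mul_blade_right_apply)
qed

lemma homogeneous_setP:
  fixes T :: "nat set \<Rightarrow> 'a"
  assumes "invertible T" "T \<in> cleven n \<or> T \<in> clodd n" shows "T \<in> setP n eta"
proof -
  have "T = clone \<odot> T" using invertibleD[OF assms(1)] by simp
  moreover have "clone \<in> clunits n eta (clcenter n)" by (simp add: clunits_clcenter_iff)
  moreover have "T \<in> clunits n eta (cleven n) \<union> clunits n eta (clodd n)" using assms by (auto simp: clunits_iff)
  ultimately show ?thesis unfolding setP_def by blast
qed

lemma odd_part_eq_if_grade_inv:
  fixes T :: "nat set \<Rightarrow> 'a"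
  assumes on: "odd n" and TC: "T \<in> Cl" and c1: "c1 \<noteq> 0"
    and aT: "grade_inv T = scale c0 T \<oplus> scale c1 (T \<odot> pscalar)"
  shows "odd_part T = scale ((1 - c0) / (c1 * pscalar_sign)) (even_part T \<odot> pscalar)"
proof -
  have "even_part T = even_part (grade_inv T)" by (simp add: even_part_grade_inv)
  also have "\<dots> = scale c0 (even_part T) \<oplus> scale c1 (odd_part T \<odot> pscalar)"
    unfolding aT by (simp add: even_part_cadd even_part_scale even_part_mul_pscalar[OF on])
  finally have "even_part T = scale c0 (even_part T) \<oplus> scale c1 (odd_part T \<odot> pscalar)" .
  hence e: "scale c1 (odd_part T \<odot> pscalar) = scale (1 - c0) (even_part T)"
    by (auto simp: fun_eq_iff algebra_simps dest: fun_cong)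
  have "scale (c1 * pscalar_sign) (odd_part T) = scale c1 (odd_part T \<odot> pscalar \<odot> pscalar)"
    by (simp add: mul_assoc pscalar_square pscalar_sign_def mul_scale_right TC)
  also have "\<dots> = scale (1 - c0) (even_part T \<odot> pscalar)"
    using arg_cong[OF e, of "\<lambda>z. z \<odot> pscalar"] by (simp add: mul_scale_left)
  finally have "scale (c1 * pscalar_sign) (odd_part T) = scale (1 - c0) (even_part T \<odot> pscalar)" .
  hence "scale (1 / (c1 * pscalar_sign)) (scale (c1 * pscalar_sign) (odd_part T))
      = scale ((1 - c0) / (c1 * pscalar_sign)) (even_part T \<odot> pscalar)" by simp
  thus ?thesis using c1 pscalar_sign_neq_0 by simp
qed

lemma setP_if_odd_part_eq:
  fixes T :: "nat set \<Rightarrow> 'a"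
  assumes on: "odd n" and u: "invertible T" and opT: "odd_part T = scale d (even_part T \<odot> pscalar)"
  shows "T \<in> setP n eta"
proof -
  define W where "W = scale 1 clone \<oplus> scale d pscalar"
  have TC: "T \<in> Cl" using invertibleD[OF u] .
  have WZ: "W \<in> clcenter n" unfolding W_def clcenter_iff using span1I_combination[of 1 d] on by blast
  have comm: "W \<odot> even_part T = even_part T \<odot> W" using clcenter_commute[OF WZ] TC by simp
  have "T = even_part T \<oplus> odd_part T" by (rule even_part_cadd_odd_part)
  also have "\<dots> = even_part T \<odot> W" unfolding W_def opT by (simp add: mul_cadd_right mul_scale_right TC)
  finally have TW: "T = W \<odot> even_part T" using comm by simp
  have "invertible W" "invertible (even_part T)"
    using invertible_factors_if_commute[OF _ clcenter_clalg[OF WZ] _ comm] u TW TC by auto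
  thus ?thesis using TW WZ even_part_cleven[OF TC] unfolding setP_def
    by (auto simp: clunits_clcenter_iff clunits_iff)
qed

lemma setP_if_grade_inv_quotient_central:
  fixes T :: "nat set \<Rightarrow> 'a"
  assumes u: "invertible T" and c: "cinv T \<odot> grade_inv T \<in> clcenter n"
  shows "T \<in> setP n eta"
proof -
  define cc where "cc = cinv T \<odot> grade_inv T"
  have TC: "T \<in> Cl" using invertibleD[OF u] .
  have Zc: "span1I cc" and ec: "even n \<longrightarrow> cc {..<n} = 0" using c by (auto simp: clcenter_iff cc_def)
  have "grade_inv T = T \<odot> cc" using cinv_cancel[OF u, of "grade_inv T"] TC by (simp add: cc_def)
  also have "\<dots> = scale (cc {}) T \<oplus> scale (cc {..<n}) (T \<odot> pscalar)"
    by (subst span1I_decomp[OF Zc]) (simp add: mul_cadd_right mul_scale_right TC)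
  finally have aT: "grade_inv T = scale (cc {}) T \<oplus> scale (cc {..<n}) (T \<odot> pscalar)" .
  show ?thesis
  proof (cases "cc {..<n} = 0")
    case True
    with aT have "grade_inv T = scale (cc {}) T" by simp
    thus ?thesis by (intro homogeneous_setP[OF u] homogeneous_if_grade_inv_scale[OF u])
  next
    case False
    with ec have on: "odd n" by auto
    show ?thesis by (rule setP_if_odd_part_eq[OF on u odd_part_eq_if_grade_inv[OF on TC False aT]])
  qed
qed

section \<open>The groups Gamma^k versus Q and Q'\<close>

lemma norm_mul_clcenter:
  fixes W S :: "nat set \<Rightarrow> 'a"
  assumes W: "W \<in> clcenter n" and S: "S \<in> Cl"
  shows "clrev (W \<odot> S) \<odot> (W \<odot> S) = (clrev W \<odot> W) \<odot> (clrev S \<odot> S)"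
proof -
  have MZ: "clrev W \<odot> W \<in> clcenter n" by (intro clcenter_mul clcenter_clrev W)
  have "clrev (W \<odot> S) \<odot> (W \<odot> S) = clrev S \<odot> ((clrev W \<odot> W) \<odot> S)"
    by (simp add: clrev_mul mul_assoc)
  also have "\<dots> = (clrev W \<odot> W) \<odot> (clrev S \<odot> S)" using clcenter_commute[OF MZ, of "clrev S"] S
    by (simp add: mul_assoc[symmetric])
  finally show ?thesis .
qed

lemma conj_mul_clcenter:
  fixes W S X :: "nat set \<Rightarrow> 'a"
  assumes W: "W \<in> clcenter n" "invertible W" and S: "invertible S"
  shows "(W \<odot> S) \<odot> X \<odot> cinv (W \<odot> S) = S \<odot> X \<odot> cinv S"
proof -
  have "(W \<odot> S) \<odot> X \<odot> cinv (W \<odot> S) = W \<odot> (S \<odot> X \<odot> cinv S) \<odot> cinv W"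
    using invertible_mul(2)[OF W(2) S] by (simp add: mul_assoc)
  also have "\<dots> = (S \<odot> X \<odot> cinv S) \<odot> W \<odot> cinv W"
    using clcenter_commute[OF W(1), of "S \<odot> X \<odot> cinv S"] by simp
  also have "\<dots> = S \<odot> X \<odot> cinv S" using cinv_cancel[OF W(2), of "S \<odot> X \<odot> cinv S"] by simp
  finally show ?thesis .
qed

lemma conj_setP_grmod4:
  fixes W S X :: "nat set \<Rightarrow> 'a"
  assumes W: "W \<in> clcenter n" "invertible W" and S: "invertible S" "S \<in> cleven n \<or> S \<in> clodd n"
    and k: "k < 4" and X: "X \<in> grmod4 n k"
    and NX: "(clrev (W \<odot> S) \<odot> (W \<odot> S)) \<odot> X = X \<odot> (clrev (W \<odot> S) \<odot> (W \<odot> S))"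
  shows "(W \<odot> S) \<odot> X \<odot> cinv (W \<odot> S) \<in> grmod4 n k"
proof -
  have XC: "X \<in> Cl" using X by (rule grmod4_clalg)
  define M where "M = clrev W \<odot> W"
  define NT where "NT = clrev (W \<odot> S) \<odot> (W \<odot> S)"
  have MZ: "M \<in> clcenter n" unfolding M_def by (intro clcenter_mul clcenter_clrev W)
  have uM: "invertible M" unfolding M_def by (rule invertible_mul(1)[OF invertible_clrev(1)[OF W(2)] W(2)])
  have NS: "clrev S \<odot> S = cinv M \<odot> NT"
    using norm_mul_clcenter[OF W(1) invertibleD[OF S(1)]] cinv_cancel[OF uM, of "clrev S \<odot> S"]
    by (simp add: M_def NT_def)
  have "(clrev S \<odot> S) \<odot> X = cinv M \<odot> (NT \<odot> X)" unfolding NS by (simp add: mul_assoc)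
  also have "\<dots> = cinv M \<odot> (X \<odot> NT)" using NX by (simp add: NT_def)
  also have "\<dots> = X \<odot> (clrev S \<odot> S)"
    using clcenter_commute[OF clcenter_cinv[OF MZ uM] XC] by (simp add: NS mul_assoc[symmetric])
  finally have NSX: "(clrev S \<odot> S) \<odot> X = X \<odot> (clrev S \<odot> S)" .
  obtain \<sigma> where "grade_inv S = scale \<sigma> S" "\<sigma> * \<sigma> = (1::'a)"
    using homogeneous_grade_inv_sign[OF S(2)] .
  from conj_homogeneous_grmod4[OF S(1) this k X NSX] show ?thesis
    by (simp add: conj_mul_clcenter[OF W S(1)])
qed

lemma setP_elim:
  assumes "T \<in> setP n eta"
  obtains W S where "T = W \<odot> S" "W \<in> clcenter n" "invertible W" "invertible S" "S \<in> cleven n \<or> S \<in> clodd n"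
  using assms unfolding setP_def by (auto simp: clunits_clcenter_iff clunits_iff)

lemma setP_invertible: "T \<in> setP n eta \<Longrightarrow> invertible T"
  by (erule setP_elim) (simp add: invertible_mul)

lemma setQ_subset_Gamma:
  fixes T :: "nat set \<Rightarrow> 'a"
  assumes k: "k < 4" and T: "T \<in> setQ n eta" shows "T \<in> Gamma n eta k"
proof -
  have TP: "T \<in> setP n eta" and NZ: "clrev T \<odot> T \<in> clcenter n" using T
    by (auto simp: setQ_def clunits_clcenter_iff)
  obtain W S where WS: "T = W \<odot> S" "W \<in> clcenter n" "invertible W" "invertible S" "S \<in> cleven n \<or> S \<in> clodd n"
    using TP by (rule setP_elim)
  show ?thesis unfolding Gamma_iff
  proof (intro conjI ballI)
    show "invertible T" using setP_invertible[OF TP] .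
    fix X :: "nat set \<Rightarrow> 'a" assume X: "X \<in> grmod4 n k"
    have "(clrev T \<odot> T) \<odot> X = X \<odot> (clrev T \<odot> T)" using clcenter_commute[OF NZ grmod4_clalg[OF X]] .
    thus "T \<odot> X \<odot> cinv T \<in> grmod4 n k" unfolding WS(1) using WS(2-5) k X by (intro conj_setP_grmod4) auto
  qed
qed

lemma Gamma_subset_setQ:
  fixes T :: "nat set \<Rightarrow> 'a"
  assumes k: "k < 4" and cent: "\<And>Z. Z \<in> Cl \<Longrightarrow> (\<forall>X\<in>grmod4 n k. Z \<odot> X = X \<odot> Z) \<Longrightarrow> Z \<in> clcenter n"
    and T: "T \<in> Gamma n eta k"
  shows "T \<in> setQ n eta"
proof -
  have u: "invertible T" using T by (rule Gamma_invertible)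
  have TC: "T \<in> Cl" using invertibleD[OF u] .
  have NZ: "clrev T \<odot> T \<in> clcenter n" using Gamma_norm_commute[OF k T] by (intro cent) auto
  have cZ: "cinv T \<odot> grade_inv T \<in> clcenter n" using Gamma_grade_inv_quotient_commute[OF k T] by (intro cent) auto
  have TP: "T \<in> setP n eta" by (rule setP_if_grade_inv_quotient_central[OF u cZ])
  have uN: "invertible (clrev T \<odot> T)" by (rule invertible_mul(1)[OF invertible_clrev(1)[OF u] u])
  show ?thesis unfolding setQ_def using TP NZ uN by (simp add: clunits_clcenter_iff)
qed

lemma commute_grmod4_support:
  fixes Z :: "nat set \<Rightarrow> 'a"
  assumes m: "1 \<le> m" "m < n" "m mod 4 = k" and Z: "Z \<in> Cl" and c: "\<forall>X\<in>grmod4 n k. Z \<odot> X = X \<odot> Z"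
    and nz: "Z A \<noteq> 0"
  shows "A = {} \<or> (A = {..<n} \<and> even (m * (n + 1)))"
  using commute_blades_support[OF m(1,2) Z _ nz] c blade_grmod4 m(3) by auto

lemma commute_grmod4_clcenter:
  fixes Z :: "nat set \<Rightarrow> 'a"
  assumes m: "1 \<le> m" "m < n" "m mod 4 = k" "odd m \<or> odd n" and Z: "Z \<in> Cl"
    and c: "\<forall>X\<in>grmod4 n k. Z \<odot> X = X \<odot> Z"
  shows "Z \<in> clcenter n"
proof -
  have h: "Z A = 0 \<or> A = {} \<or> (A = {..<n} \<and> odd n)" for A
    using commute_grmod4_support[OF m(1-3) Z c, of A] m(4) by auto
  show ?thesis unfolding clcenter_iff span1I_def using Z h top_nonempty by auto
qed

lemma commute_grmod4_span1I:
  fixes Z :: "nat set \<Rightarrow> 'a"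
  assumes m: "1 \<le> m" "m < n" "m mod 4 = k" and Z: "Z \<in> Cl"
    and c: "\<forall>X\<in>grmod4 n k. Z \<odot> X = X \<odot> Z"
  shows "span1I Z"
  unfolding span1I_def using Z commute_grmod4_support[OF m Z c] by auto

lemma commute_grmod4_span1I_n2:
  fixes Z :: "nat set \<Rightarrow> 'a"
  assumes n: "n = 2" and Z: "Z \<in> Cl" and c: "\<forall>X\<in>grmod4 n 2. Z \<odot> X = X \<odot> Z"
  shows "span1I Z"
proof -
  have pscalar_grade2: "pscalar \<in> grmod4 n 2" using n by (intro blade_grmod4) auto
  have cI: "Z \<odot> pscalar = pscalar \<odot> Z" using c pscalar_grade2 by blast
  { fix A assume nz: "Z A \<noteq> 0"
    have A: "A \<in> Blades" using support_in_Blades[OF Z nz] .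
    have par: "even (card A * n + card A)"
      using commute_blade_parity[OF Z top_in_Blades cI nz] A by (simp add: Int_absorb2)
    have "card A \<le> 2" using A n card_mono[of "{..<n}" A] by auto
    moreover have "odd (card A * 2 + card A)" if "card A = 1" using that by simp
    ultimately have "card A = 0 \<or> card A = 2" using par n by (cases "card A") (auto, presburger)
    hence "A = {} \<or> A = {..<n}"
    proof
      assume "card A = 0" thus ?thesis using Blades_finite[OF A] by simp
    next
      assume "card A = 2" thus ?thesis using A n by (intro disjI2 card_subset_eq) auto
    qed }
  thus ?thesis using Z by (auto simp: span1I_def)
qed

lemma grade_inv_pscalar_even: "even n \<Longrightarrow> grade_inv pscalar = pscalar"
  by (rule ext) (simp add: grade_inv_def blade_def)

lemma clrev_pscalar: "clrev pscalar = scale (rev_sign n) pscalar"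
proof
  fix A show "clrev pscalar A = scale (rev_sign n) pscalar A"
  proof (cases "A = {..<n}")
    case True thus ?thesis by (simp add: clrev_apply blade_def)
  qed (simp add: clrev_def blade_def)
qed

lemma invertible_neq_scale_pscalar_mul:
  fixes Y :: "nat set \<Rightarrow> 'a"
  assumes u: "invertible Y" shows "Y \<noteq> scale c (pscalar \<odot> Y)"
proof
  assume Y: "Y = scale c (pscalar \<odot> Y)"
  have "(clone \<oplus> scale (- c) pscalar) \<odot> Y = Y \<oplus> scale (- c) (pscalar \<odot> Y)"
    using invertibleD[OF u] by (simp add: mul_cadd_left mul_scale_left)
  also have "\<dots> = czero"
  proof
    fix x
    have "Y x = c * (pscalar \<odot> Y) x" using fun_cong[OF Y, of x] by simp
    thus "(Y \<oplus> scale (- c) (pscalar \<odot> Y)) x = czero x" by (simp add: czero_def)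
  qed
  finally have "clone \<oplus> scale (- c) pscalar = czero" using mul_eq_czero_cancel_right[OF u] by simp
  hence "(clone \<oplus> scale (- c) pscalar) {} = czero {}" by simp
  thus False using top_nonempty by (simp add: clone_def blade_def czero_def)
qed

lemma homogeneous_if_grade_inv_quotient_span1I:
  fixes T :: "nat set \<Rightarrow> 'a"
  assumes en: "even n" and u: "invertible T" and Zc: "span1I (cinv T \<odot> grade_inv T)"
  shows "T \<in> cleven n \<or> T \<in> clodd n"
proof -
  define cc where "cc = cinv T \<odot> grade_inv T"
  define c0 where "c0 = cc {}"
  define c1 where "c1 = cc {..<n}"
  have TC: "T \<in> Cl" using invertibleD[OF u] .
  have aT: "grade_inv T = T \<odot> cc" using cinv_cancel[OF u, of "grade_inv T"] TC by (simp add: cc_def)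
  have cdec: "cc = scale c0 clone \<oplus> scale c1 pscalar"
    unfolding c0_def c1_def cc_def by (rule span1I_decomp[OF Zc])
  have gc: "grade_inv cc = cc" unfolding cdec using grade_inv_pscalar_even[OF en] by simp
  have "T \<odot> clone = T \<odot> (cc \<odot> cc)"
  proof -
    have "T = grade_inv (grade_inv T)" by simp
    also have "\<dots> = T \<odot> (cc \<odot> cc)" by (simp only: aT grade_inv_mul gc mul_assoc)
    finally show ?thesis using TC by simp
  qed
  hence "cinv T \<odot> (T \<odot> clone) = cinv T \<odot> (T \<odot> (cc \<odot> cc))" by simp
  hence "cc \<odot> cc = clone" using cinv_cancel(1)[OF u] cdec by simp
  hence sq: "scale (c0 * c0 + c1 * c1 * pscalar_sign) clone \<oplus> scale (c0 * c1 + c1 * c0) pscalar = clone"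
    unfolding cdec span1I_mul .
  have "c0 * c1 + c1 * c0 = 0"
    using fun_cong[OF sq, of "{..<n}"] top_nonempty by (simp add: clone_def blade_def)
  then consider "c1 = 0" | "c0 = 0" by auto
  thus ?thesis
  proof cases
    case 1
    hence "grade_inv T = scale c0 T" using aT cdec TC by (simp add: mul_cadd_right mul_scale_right)
    thus ?thesis by (rule homogeneous_if_grade_inv_scale[OF u])
  next
    case 2
    hence "grade_inv T = scale c1 (pscalar \<odot> grade_inv T)"
      using aT cdec TC pscalar_commute_even[OF en, of T] by (simp add: mul_cadd_right mul_scale_right)
    with invertible_neq_scale_pscalar_mul[OF invertible_grade_inv(1)[OF u]] show ?thesis by blast
  qed
qed

lemma Gamma_even_dim:
  fixes T :: "nat set \<Rightarrow> 'a"
  assumes en: "even n" and k: "k < 4" and cent: "\<And>Z. Z \<in> Cl \<Longrightarrow> \<forall>X\<in>grmod4 n k. Z \<odot> X = X \<odot> Z \<Longrightarrow> span1I Z"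
    and T: "T \<in> Gamma n eta k"
  shows "(T \<in> cleven n \<or> T \<in> clodd n) \<and> span1I (clrev T \<odot> T)"
proof -
  have u: "invertible T" using T by (rule Gamma_invertible)
  have "span1I (cinv T \<odot> grade_inv T)" using Gamma_grade_inv_quotient_commute[OF k T] by (intro cent) auto
  moreover have "span1I (clrev T \<odot> T)" using Gamma_norm_commute[OF k T] by (intro cent) auto
  ultimately show ?thesis using homogeneous_if_grade_inv_quotient_span1I[OF en u] by blast
qed

lemma Gamma_eq_setQ_if_center:
  assumes m: "1 \<le> m" "m < n" "m mod 4 = k" "odd m \<or> odd n"
  shows "Gamma n eta k = (setQ n eta :: (nat set \<Rightarrow> 'a) set)"
proof -
  have k: "k < 4" using m(3) by auto
  show ?thesis
  proof
    show "Gamma n eta k \<subseteq> setQ n eta"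
      using Gamma_subset_setQ[OF k] commute_grmod4_clcenter[OF m] by blast
    show "setQ n eta \<subseteq> Gamma n eta k" using setQ_subset_Gamma[OF k] by blast
  qed
qed

lemma Gamma1_eq_setQ: "Gamma n eta 1 = (setQ n eta :: (nat set \<Rightarrow> 'a) set)"
  using n_ge_2 by (intro Gamma_eq_setQ_if_center[of 1]) auto
lemma Gamma3_eq_setQ: "n \<ge> 4 \<Longrightarrow> Gamma n eta 3 = (setQ n eta :: (nat set \<Rightarrow> 'a) set)"
  by (intro Gamma_eq_setQ_if_center[of 3]) auto
lemma Gamma0_eq_setQ_odd: "odd n \<Longrightarrow> n \<ge> 5 \<Longrightarrow> Gamma n eta 0 = (setQ n eta :: (nat set \<Rightarrow> 'a) set)"
  by (intro Gamma_eq_setQ_if_center[of 4]) auto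
lemma Gamma2_eq_setQ_odd: "odd n \<Longrightarrow> n \<ge> 3 \<Longrightarrow> Gamma n eta 2 = (setQ n eta :: (nat set \<Rightarrow> 'a) set)"
  by (intro Gamma_eq_setQ_if_center[of 2]) auto

lemma clrev_fixed_top_coeff:
  fixes N :: "nat set \<Rightarrow> 'a"
  assumes "clrev N = N" "rev_sign n = (-1::'a)" shows "N {..<n} = 0"
proof -
  have "N {..<n} = rev_sign n * N {..<n}" using fun_cong[OF assms(1), of "{..<n}"] by (simp add: clrev_apply)
  hence "N {..<n} = - N {..<n}" using assms(2) by simp
  thus ?thesis by (simp add: eq_neg_iff_add_eq_0)
qed

lemma clrev_norm: "clrev (clrev T \<odot> T) = clrev T \<odot> (T :: nat set \<Rightarrow> 'a)"
  by (simp add: clrev_mul)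

lemma commute_grmod4_span1I_even_k:
  fixes Z :: "nat set \<Rightarrow> 'a"
  assumes "k = 2 \<or> (k = 0 \<and> n \<ge> 5)" "Z \<in> Cl" "\<forall>X\<in>grmod4 n k. Z \<odot> X = X \<odot> Z"
  shows "span1I Z"
proof (cases "n = 2 \<and> k = 2")
  case True thus ?thesis using commute_grmod4_span1I_n2 assms by auto
next
  case False
  show ?thesis
  proof (cases "k = 2")
    case True
    with False n_ge_2 have "n \<ge> 3" by auto
    thus ?thesis using commute_grmod4_span1I[of 2 k Z] assms True by auto
  next
    case False
    thus ?thesis using commute_grmod4_span1I[of 4 k Z] assms by auto
  qed
qed

lemma Gamma_eq_setQ_2mod4:
  assumes nm: "n mod 4 = 2" and k: "k = 2 \<or> (k = 0 \<and> n \<ge> 5)"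
  shows "Gamma n eta k = (setQ n eta :: (nat set \<Rightarrow> 'a) set)"
proof
  have k4: "k < 4" using k by auto
  have en: "even n" using nm by presburger
  have even_part: "rev_sign n = (-1::'a)" using nm by (simp add: rev_sign_def)
  show "setQ n eta \<subseteq> Gamma n eta k" using setQ_subset_Gamma[OF k4] by blast
  show "Gamma n eta k \<subseteq> setQ n eta"
  proof
    fix T :: "nat set \<Rightarrow> 'a" assume T: "T \<in> Gamma n eta k"
    have u: "invertible T" using T by (rule Gamma_invertible)
    have h: "(T \<in> cleven n \<or> T \<in> clodd n) \<and> span1I (clrev T \<odot> T)"
      by (rule Gamma_even_dim[OF en k4 _ T]) (use commute_grmod4_span1I_even_k[OF k] in blast)
    have "(clrev T \<odot> T) {..<n} = 0" by (rule clrev_fixed_top_coeff[OF clrev_norm even_part])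
    hence NZ: "clrev T \<odot> T \<in> clcenter n" using h by (simp add: clcenter_iff)
    have uN: "invertible (clrev T \<odot> T)" by (rule invertible_mul(1)[OF invertible_clrev(1)[OF u] u])
    have "T \<in> setP n eta" using homogeneous_setP[OF u] h by blast
    thus "T \<in> setQ n eta" unfolding setQ_def using NZ uN by (simp add: clunits_clcenter_iff)
  qed
qed

lemma setQ'_iff: "(T :: nat set \<Rightarrow> 'a) \<in> setQ' n eta \<longleftrightarrow> T \<in> setP n eta \<and> span1I (clrev T \<odot> T) \<and> invertible (clrev T \<odot> T)"
  by (simp add: setQ'_def clunits_iff ssum_grade_0_top_iff)

lemma span1I_commute_even:
  fixes N X :: "nat set \<Rightarrow> 'a"
  assumes en: "even n" and N: "span1I N" and X: "X \<in> cleven n"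
  shows "N \<odot> X = X \<odot> N"
proof -
  have XC: "X \<in> Cl" and gX: "grade_inv X = X" using X by (auto simp: cleven_iff)
  have cI: "pscalar \<odot> X = X \<odot> pscalar" using pscalar_commute_even[OF en, of X] gX by simp
  show ?thesis by (subst (1 2) span1I_decomp[OF N]) (simp add: mul_cadd_left mul_cadd_right mul_scale_left mul_scale_right XC cI)
qed

lemma setQ'_subset_Gamma:
  assumes en: "even n" and k: "k \<in> {0, 2}" and T: "(T :: nat set \<Rightarrow> 'a) \<in> setQ' n eta"
  shows "T \<in> Gamma n eta k"
proof -
  have k4: "k < 4" using k by auto
  have TP: "T \<in> setP n eta" and NZ: "span1I (clrev T \<odot> T)" using T by (auto simp: setQ'_iff)
  obtain W S where WS: "T = W \<odot> S" "W \<in> clcenter n" "invertible W" "invertible S" "S \<in> cleven n \<or> S \<in> clodd n"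
    using TP by (rule setP_elim)
  show ?thesis unfolding Gamma_iff
  proof (intro conjI ballI)
    show "invertible T" using setP_invertible[OF TP] .
    fix X :: "nat set \<Rightarrow> 'a" assume X: "X \<in> grmod4 n k"
    have "(clrev T \<odot> T) \<odot> X = X \<odot> (clrev T \<odot> T)"
      by (rule span1I_commute_even[OF en NZ grmod4_cleven[OF k X]])
    thus "T \<odot> X \<odot> cinv T \<in> grmod4 n k" unfolding WS(1) using WS(2-5) k4 X by (intro conj_setP_grmod4) auto
  qed
qed

lemma Gamma_subset_setQ'_0mod4:
  assumes nm: "n mod 4 = 0" and k: "k = 2 \<or> (k = 0 \<and> n \<ge> 5)"
  shows "Gamma n eta k \<subseteq> (setQ' n eta :: (nat set \<Rightarrow> 'a) set)"
proof
  have k4: "k < 4" using k by auto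
  have en: "even n" using nm by presburger
  fix T :: "nat set \<Rightarrow> 'a" assume T: "T \<in> Gamma n eta k"
  have u: "invertible T" using T by (rule Gamma_invertible)
  have h: "(T \<in> cleven n \<or> T \<in> clodd n) \<and> span1I (clrev T \<odot> T)"
    by (rule Gamma_even_dim[OF en k4 _ T]) (use commute_grmod4_span1I_even_k[OF k] in blast)
  have uN: "invertible (clrev T \<odot> T)" by (rule invertible_mul(1)[OF invertible_clrev(1)[OF u] u])
  have "T \<in> setP n eta" using homogeneous_setP[OF u] h by blast
  thus "T \<in> setQ' n eta" using h uN by (simp add: setQ'_iff)
qed

lemma grmod4_0_span1I_n4:
  assumes n4: "n = 4" and X: "X \<in> grmod4 n 0"
  shows "span1I (X :: nat set \<Rightarrow> 'a)"
proof -
  { fix A assume nz: "X A \<noteq> 0"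
    hence A: "A \<in> Blades" "card A mod 4 = 0" using X by (auto simp: grmod4_def clalg_def)
    hence "card A = 0 \<or> card A = 4" using Blades_card_le[OF A(1)] n4 by auto
    hence "A = {} \<or> A = {..<n}" using Blades_finite[OF A(1)] Blades_card_eq_top[OF A(1)] n4 by auto }
  thus ?thesis using X grmod4_clalg by (auto simp: span1I_def)
qed

lemma conj_pscalar_eq_scale:
  fixes T :: "nat set \<Rightarrow> 'a"
  assumes u: "invertible T" and ZY: "span1I (T \<odot> pscalar \<odot> cinv T)"
  obtains y where "T \<odot> pscalar \<odot> cinv T = scale y pscalar"
proof -
  define Y where "Y = T \<odot> pscalar \<odot> cinv T"
  define y0 where "y0 = Y {}"
  define y1 where "y1 = Y {..<n}"
  have TC: "T \<in> Cl" using invertibleD[OF u] .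
  have Ydec: "Y = scale y0 clone \<oplus> scale y1 pscalar"
    unfolding y0_def y1_def Y_def by (rule span1I_decomp[OF ZY])
  have "Y \<odot> Y = T \<odot> (pscalar \<odot> pscalar) \<odot> cinv T"
    unfolding Y_def using cinv_cancel[OF u] by (simp add: mul_assoc)
  also have "\<dots> = scale pscalar_sign clone" using cinv_props[OF u]
    by (simp add: pscalar_square pscalar_sign_def mul_scale_left mul_scale_right mul_assoc[symmetric] TC)
  finally have "scale (y0 * y0 + y1 * y1 * pscalar_sign) clone \<oplus> scale (y0 * y1 + y1 * y0) pscalar
      = scale pscalar_sign clone"
    unfolding Ydec span1I_mul .
  hence "(scale (y0 * y0 + y1 * y1 * pscalar_sign) clone \<oplus> scale (y0 * y1 + y1 * y0) pscalar) {..<n}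
      = scale pscalar_sign clone {..<n}" by simp
  hence "y0 * y1 + y1 * y0 = 0" using top_nonempty by (simp only: span1I_coeffs) (simp add: clone_def)
  moreover have "y1 \<noteq> 0"
  proof
    assume "y1 = 0"
    moreover have "pscalar = cinv T \<odot> Y \<odot> T" unfolding Y_def using cinv_cancel[OF u] by (simp add: mul_assoc)
    ultimately have "pscalar = cinv T \<odot> scale y0 clone \<odot> T" using Ydec by simp
    also have "\<dots> = scale y0 clone" using cinv_props[OF u] by (simp add: mul_scale_left mul_scale_right)
    finally have "pscalar {..<n} = scale y0 clone {..<n}" by simp
    thus False using top_nonempty by (simp add: blade_def clone_def)
  qed
  ultimately have "Y = scale y1 pscalar" using Ydec by simp
  thus ?thesis using that by (simp add: Y_def)
qed

lemma grade_inv_eq_if_conj_pscalar: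
  fixes T :: "nat set \<Rightarrow> 'a"
  assumes en: "even n" and u: "invertible T" and Y: "T \<odot> pscalar \<odot> cinv T = scale y pscalar"
  shows "grade_inv T = scale y T"
proof -
  have TC: "T \<in> Cl" using invertibleD[OF u] .
  have "pscalar \<odot> grade_inv T = T \<odot> pscalar" using pscalar_commute_even[OF en, of T] by simp
  also have "\<dots> = (T \<odot> pscalar \<odot> cinv T) \<odot> T"
    using cinv_cancel(4)[OF u, of "T \<odot> pscalar"] by simp
  also have "\<dots> = pscalar \<odot> scale y T" unfolding Y by (simp add: mul_scale_left mul_scale_right)
  finally have "cinv pscalar \<odot> (pscalar \<odot> grade_inv T) = cinv pscalar \<odot> (pscalar \<odot> scale y T)"
    by simp
  thus ?thesis using cinv_cancel(1)[OF invertible_pscalar(1)] TC by simp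
qed

lemma Gamma0_subset_setQ'_n4:
  assumes n4: "n = 4"
  shows "Gamma n eta 0 \<subseteq> (setQ' n eta :: (nat set \<Rightarrow> 'a) set)"
proof
  fix T :: "nat set \<Rightarrow> 'a" assume T: "T \<in> Gamma n eta 0"
  have u: "invertible T" using T by (rule Gamma_invertible)
  have "pscalar \<in> grmod4 n 0" using n4 by (intro blade_grmod4) auto
  hence "T \<odot> pscalar \<odot> cinv T \<in> grmod4 n 0" using T by (simp add: Gamma_iff)
  hence "span1I (T \<odot> pscalar \<odot> cinv T)" by (rule grmod4_0_span1I_n4[OF n4])
  then obtain y where "T \<odot> pscalar \<odot> cinv T = scale y pscalar" by (rule conj_pscalar_eq_scale[OF u])
  hence eo: "T \<in> cleven n \<or> T \<in> clodd n" using n4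
    by (intro homogeneous_if_grade_inv_scale[OF u] grade_inv_eq_if_conj_pscalar[OF _ u]) auto
  have "invertible (clrev T \<odot> T)" by (rule invertible_mul(1)[OF invertible_clrev(1)[OF u] u])
  thus "T \<in> setQ' n eta" using homogeneous_setP[OF u eo] grmod4_0_span1I_n4[OF n4 norm_grmod4_0[OF eo]]
    by (simp add: setQ'_iff)
qed

lemma pscalar_sign_cases: "pscalar_sign = 1 \<or> pscalar_sign = (-1 :: 'a)"
proof -
  have "(pscalar_sign - 1) * (pscalar_sign + 1) = (0::'a)" using pscalar_sign_square by (simp add: algebra_simps)
  thus ?thesis by (auto simp: eq_neg_iff_add_eq_0)
qed

lemma setQ_neq_setQ':
  assumes nm: "n mod 4 = 0"
  shows "setQ n eta \<noteq> (setQ' n eta :: (nat set \<Rightarrow> 'a) set)"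
proof -
  have en: "even n" using nm by presburger
  define T0 :: "nat set \<Rightarrow> 'a" where "T0 = scale 2 clone \<oplus> scale 1 pscalar"
  define U :: "nat set \<Rightarrow> 'a" where "U = scale 2 clone \<oplus> scale (-1) pscalar"
  have d: "4 - pscalar_sign \<noteq> (0::'a)" using pscalar_sign_cases by auto
  have TU: "T0 \<odot> U = scale (4 - pscalar_sign) clone" "U \<odot> T0 = scale (4 - pscalar_sign) clone"
    unfolding T0_def U_def span1I_mul by (rule ext, simp)+
  have uT: "invertible T0"
  proof (rule invertibleI)
    show "T0 \<in> Cl" "scale (1 / (4 - pscalar_sign)) U \<in> Cl" by (simp_all add: T0_def U_def)
    show "T0 \<odot> scale (1 / (4 - pscalar_sign)) U = clone" "scale (1 / (4 - pscalar_sign)) U \<odot> T0 = clone"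
      using TU d by (simp_all add: mul_scale_left mul_scale_right)
  qed
  have eT: "T0 \<in> cleven n" unfolding cleven_iff T0_def using grade_inv_pscalar_even[OF en] by simp
  have rT: "clrev T0 = T0" unfolding T0_def using nm by (simp add: clrev_pscalar rev_sign_def)
  have N: "clrev T0 \<odot> T0 = scale (4 + pscalar_sign) clone \<oplus> scale 4 pscalar"
  proof -
    have "clrev T0 \<odot> T0 = T0 \<odot> T0" using rT by simp
    also have "\<dots> = scale (4 + pscalar_sign) clone \<oplus> scale 4 pscalar" unfolding T0_def span1I_mul by simp
    finally show ?thesis .
  qed
  have uN: "invertible (clrev T0 \<odot> T0)" by (rule invertible_mul(1)[OF invertible_clrev(1)[OF uT] uT])
  have TP: "T0 \<in> setP n eta" using homogeneous_setP[OF uT] eT by blast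
  have "T0 \<in> setQ' n eta" using TP uN span1I_combination by (simp add: setQ'_iff N)
  moreover have "T0 \<notin> setQ n eta"
  proof
    assume "T0 \<in> setQ n eta"
    hence "clrev T0 \<odot> T0 \<in> clcenter n" by (simp add: setQ_def clunits_clcenter_iff)
    hence "(clrev T0 \<odot> T0) {..<n} = 0" using en by (simp add: clcenter_iff)
    thus False unfolding N span1I_coeffs by simp
  qed
  ultimately show ?thesis by blast
qed

section \<open>Dimensions two and three\<close>

lemma Gamma0_small:
  assumes "n \<le> 3" shows "Gamma n eta 0 = (clunits n eta Cl :: (nat set \<Rightarrow> 'a) set)"
proof (rule Gamma_eq_clunits_if_fixed)
  fix X T :: "nat set \<Rightarrow> 'a" assume X: "X \<in> grmod4 n 0" and u: "invertible T"
  { fix A assume nz: "X A \<noteq> 0"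
    hence A: "A \<in> Blades" "card A mod 4 = 0" using X by (auto simp: grmod4_def clalg_def)
    hence "card A = 0" using Blades_card_le[OF A(1)] assms by auto
    hence "A = {}" using Blades_finite[OF A(1)] by simp }
  hence XX: "X = scale (X {}) clone" by (auto simp: fun_eq_iff clone_def)
  have "T \<odot> scale (X {}) clone \<odot> cinv T = scale (X {}) (T \<odot> cinv T)"
    using invertibleD[OF u] by (simp add: mul_scale_left mul_scale_right)
  also have "\<dots> = scale (X {}) clone" using cinv_props[OF u] by simp
  finally show "T \<odot> X \<odot> cinv T = X" using XX by simp
qed

lemma Gamma3_n3:
  assumes "n = 3" shows "Gamma n eta 3 = (clunits n eta Cl :: (nat set \<Rightarrow> 'a) set)"
proof (rule Gamma_eq_clunits_if_fixed)
  fix X T :: "nat set \<Rightarrow> 'a" assume X: "X \<in> grmod4 n 3" and u: "invertible T"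
  have XC: "X \<in> Cl" using X by (rule grmod4_clalg)
  have h: "X A = 0 \<or> A = {..<n}" for A
  proof (cases "X A = 0")
    case False
    hence A: "A \<in> Blades" "card A mod 4 = 3" using X by (auto simp: grmod4_def clalg_def)
    hence "card A = n" using Blades_card_le[OF A(1)] assms by auto
    thus ?thesis using Blades_card_eq_top[OF A(1)] by simp
  qed simp
  have on: "odd n" using assms by simp
  have XZ: "X \<in> clcenter n" unfolding clcenter_iff span1I_def using XC on h by blast
  show "T \<odot> X \<odot> cinv T = X" using clcenter_commute[OF XZ invertibleD[OF u]] cinv_cancel[OF u XC] by simp
qed

lemma grmod4_0_clcenter_small:
  fixes X :: "nat set \<Rightarrow> 'a"
  assumes "n \<le> 3" "X \<in> grmod4 n 0" shows "X \<in> clcenter n"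
proof -
  have h: "X A = 0 \<or> A = {}" for A
  proof (cases "X A = 0")
    case False
    hence A: "A \<in> Blades" "card A mod 4 = 0" using assms(2) by (auto simp: grmod4_def clalg_def)
    hence "card A = 0" using Blades_card_le[OF A(1)] assms(1) by auto
    thus ?thesis using Blades_finite[OF A(1)] by simp
  qed simp
  show ?thesis unfolding clcenter_iff span1I_def using grmod4_clalg[OF assms(2)] h top_nonempty by blast
qed

lemma setP_subset_setQ_small:
  assumes "n \<le> 3" shows "setP n eta \<subseteq> (setQ n eta :: (nat set \<Rightarrow> 'a) set)"
proof
  fix T :: "nat set \<Rightarrow> 'a" assume TP: "T \<in> setP n eta"
  obtain W S where WS: "T = W \<odot> S" "W \<in> clcenter n" "invertible W" "invertible S" "S \<in> cleven n \<or> S \<in> clodd n"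
    using TP by (rule setP_elim)
  have u: "invertible T" using setP_invertible[OF TP] .
  have "clrev T \<odot> T = (clrev W \<odot> W) \<odot> (clrev S \<odot> S)"
    unfolding WS(1) by (rule norm_mul_clcenter[OF WS(2) invertibleD[OF WS(4)]])
  moreover have "clrev W \<odot> W \<in> clcenter n" by (intro clcenter_mul clcenter_clrev WS(2))
  moreover have "clrev S \<odot> S \<in> clcenter n" by (rule grmod4_0_clcenter_small[OF assms norm_grmod4_0[OF WS(5)]])
  ultimately have NZ: "clrev T \<odot> T \<in> clcenter n" using clcenter_mul by simp
  have uN: "invertible (clrev T \<odot> T)" by (rule invertible_mul(1)[OF invertible_clrev(1)[OF u] u])
  show "T \<in> setQ n eta" unfolding setQ_def using TP NZ uN by (simp add: clunits_clcenter_iff)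
qed

lemma setP_homogeneous_even:
  fixes T :: "nat set \<Rightarrow> 'a"
  assumes en: "even n" and TP: "T \<in> setP n eta"
  shows "T \<in> clunits n eta (cleven n) \<union> clunits n eta (clodd n)"
proof -
  obtain W S where WS: "T = W \<odot> S" "W \<in> clcenter n" "invertible W" "invertible S" "S \<in> cleven n \<or> S \<in> clodd n"
    using TP by (rule setP_elim)
  have u: "invertible T" using setP_invertible[OF TP] .
  have ZW: "span1I W" "W {..<n} = 0" using WS(2) en by (auto simp: clcenter_iff)
  have Wd: "W = scale (W {}) clone" using span1I_decomp[OF ZW(1)] ZW(2) by simp
  have T': "T = scale (W {}) S" unfolding WS(1) using invertibleD[OF WS(4)] by (subst Wd) (simp add: mul_scale_left)
  have "T \<in> cleven n \<or> T \<in> clodd n" using WS(5) invertibleD[OF WS(4)] unfolding T'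
    by (auto simp: cleven_iff clodd_iff)
  thus ?thesis using u by (auto simp: clunits_iff)
qed

definition two_plus_e0 :: "nat set \<Rightarrow> 'a" where "two_plus_e0 = scale 2 clone \<oplus> scale 1 (blade {0})"

lemma two_plus_e0_facts:
  "invertible two_plus_e0" "two_plus_e0 {} = 2" "two_plus_e0 {0} = 1"
  "two_plus_e0 \<notin> cleven n" "two_plus_e0 \<notin> clodd n"
proof -
  have B: "{0} \<in> Blades" using n_ge_2 by auto
  define e where "e = bsign eta {0} {0}"
  have e: "e = 1 \<or> e = -1"
  proof -
    have "(e - 1) * (e + 1) = 0" using bsign_square[of "{0}" "{0}"] by (simp add: e_def algebra_simps)
    thus ?thesis by (auto simp: eq_neg_iff_add_eq_0)
  qed
  define U :: "nat set \<Rightarrow> 'a" where "U = scale 2 clone \<oplus> scale (-1) (blade {0})"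
  have d: "4 - e \<noteq> (0::'a)" using e by auto
  have TU: "two_plus_e0 \<odot> U = scale (4 - e) clone" "U \<odot> two_plus_e0 = scale (4 - e) clone"
    unfolding two_plus_e0_def U_def blade_span_mul[OF B] e_def[symmetric] by (rule ext, simp)+
  show "invertible two_plus_e0"
  proof (rule invertibleI)
    show "two_plus_e0 \<in> Cl" "scale (1 / (4 - e)) U \<in> Cl" using B by (simp_all add: two_plus_e0_def U_def)
    show "two_plus_e0 \<odot> scale (1 / (4 - e)) U = clone" "scale (1 / (4 - e)) U \<odot> two_plus_e0 = clone"
      using TU d by (simp_all add: mul_scale_left mul_scale_right)
  qed
  show "two_plus_e0 {} = 2" "two_plus_e0 {0} = 1" by (simp_all add: two_plus_e0_def clone_def blade_def)
  show "two_plus_e0 \<notin> cleven n"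
  proof
    assume "two_plus_e0 \<in> cleven n" hence "two_plus_e0 {0} = 0" by (simp add: cleven_def)
    thus False using \<open>two_plus_e0 {0} = 1\<close> by simp
  qed
  show "two_plus_e0 \<notin> clodd n"
  proof
    assume "two_plus_e0 \<in> clodd n" hence "two_plus_e0 {} = 0" by (simp add: clodd_def)
    thus False using \<open>two_plus_e0 {} = 2\<close> by simp
  qed
qed

lemma homogeneous_units_neq_clunits:
  "clunits n eta (cleven n) \<union> clunits n eta (clodd n) \<noteq> (clunits n eta Cl :: (nat set \<Rightarrow> 'a) set)"
proof -
  have "two_plus_e0 \<in> clunits n eta Cl" using two_plus_e0_facts(1) by (simp add: invertible_def)
  moreover have "two_plus_e0 \<notin> clunits n eta (cleven n) \<union> clunits n eta (clodd n)"
    using two_plus_e0_facts(4,5) by (auto simp: clunits_iff)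
  ultimately show ?thesis by blast
qed

lemma grade_inv_pscalar_odd: "odd n \<Longrightarrow> grade_inv pscalar = scale (-1) pscalar"
  by (rule ext) (simp add: grade_inv_def blade_def)

lemma pscalar_clcenter_odd: "odd n \<Longrightarrow> pscalar \<in> clcenter n"
  unfolding clcenter_iff span1I_def using blade_clalg[OF top_in_Blades] by (auto simp: blade_def)

lemma setP_eq_center_even:
  assumes on: "odd n"
  shows "setP n eta = {W \<odot> T |W T. W \<in> clunits n eta (clcenter n) \<and> T \<in> clunits n eta (cleven n)}"
    (is "_ = ?R")
proof
  show "?R \<subseteq> setP n eta" unfolding setP_def by blast
  show "setP n eta \<subseteq> ?R"
  proof
    fix T :: "nat set \<Rightarrow> 'a" assume TP: "T \<in> setP n eta"
    obtain W S where WS: "T = W \<odot> S" "W \<in> clcenter n" "invertible W" "invertible S" "S \<in> cleven n \<or> S \<in> clodd n"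
      using TP by (rule setP_elim)
    show "T \<in> ?R"
    proof (cases "S \<in> cleven n")
      case True
      thus ?thesis using WS by (auto simp: clunits_clcenter_iff clunits_iff)
    next
      case False
      hence So: "S \<in> clodd n" using WS(5) by simp
      have SC: "S \<in> Cl" using invertibleD[OF WS(4)] .
      define S2 where "S2 = cinv pscalar \<odot> S"
      have uS2: "invertible S2"
        unfolding S2_def by (rule invertible_mul(1)[OF invertible_cinv(1)[OF invertible_pscalar(1)] WS(4)])
      have eS2: "S2 \<in> cleven n"
      proof -
        have "grade_inv S = scale (-1) S" using So by (simp add: clodd_iff)
        hence "grade_inv S2 = S2" unfolding S2_def invertible_pscalar(2) using grade_inv_pscalar_odd[OF on]
          by (simp add: grade_inv_mul mul_scale_left mul_scale_right)
        thus ?thesis using invertibleD[OF uS2] by (simp add: cleven_iff)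
      qed
      have IZ: "pscalar \<in> clcenter n" by (rule pscalar_clcenter_odd[OF on])
      have WIZ: "W \<odot> pscalar \<in> clcenter n" by (rule clcenter_mul[OF WS(2) IZ])
      have uWI: "invertible (W \<odot> pscalar)" by (rule invertible_mul(1)[OF WS(3) invertible_pscalar(1)])
      have "T = (W \<odot> pscalar) \<odot> S2"
        unfolding WS(1) S2_def using cinv_cancel(2)[OF invertible_pscalar(1) SC] by (simp add: mul_assoc)
      thus ?thesis using WIZ uWI uS2 eS2 by (auto simp: clunits_clcenter_iff clunits_iff)
    qed
  qed
qed

lemma even_part_clcenter_mul_cleven:
  fixes W S :: "nat set \<Rightarrow> 'a"
  assumes on: "odd n" and W: "W \<in> clcenter n" and S: "S \<in> cleven n"
  shows "even_part (W \<odot> S) = scale (W {}) S"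
proof -
  have SC: "S \<in> Cl" using S by (simp add: cleven_def)
  have ZW: "span1I W" using W by (simp add: clcenter_iff)
  have "W \<odot> S = scale (W {}) S \<oplus> scale (W {..<n}) (S \<odot> pscalar)"
    using clcenter_commute[OF pscalar_clcenter_odd[OF on] SC]
    by (subst span1I_decomp[OF ZW]) (simp add: mul_cadd_left mul_scale_left SC)
  moreover have "odd_part S = czero" using S by (auto simp: fun_eq_iff cleven_def odd_part_def czero_def)
  ultimately show ?thesis
    by (simp add: even_part_cadd even_part_scale even_part_mul_pscalar[OF on] even_part_cleven_id[OF S])
qed

lemma center_even_units_neq_clunits:
  assumes on: "odd n"
  shows "{W \<odot> T |W T. W \<in> clunits n eta (clcenter n) \<and> T \<in> clunits n eta (cleven n)}
    \<noteq> (clunits n eta Cl :: (nat set \<Rightarrow> 'a) set)"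
proof
  assume eq: "{W \<odot> T |W T. W \<in> clunits n eta (clcenter n) \<and> T \<in> clunits n eta (cleven n)} = clunits n eta Cl"
  have "two_plus_e0 \<in> clunits n eta Cl" using two_plus_e0_facts(1) by (simp add: invertible_def)
  hence "two_plus_e0 \<in> {W \<odot> T |W T. W \<in> clunits n eta (clcenter n) \<and> T \<in> clunits n eta (cleven n)}"
    using eq by simp
  then obtain W S where T: "two_plus_e0 = W \<odot> S"
    and "W \<in> clunits n eta (clcenter n)" "S \<in> clunits n eta (cleven n)" by blast
  hence W: "W \<in> clcenter n" and S: "S \<in> cleven n" by (simp_all add: clunits_iff)
  have "even_part two_plus_e0 = scale 2 clone"
    by (rule ext) (simp add: two_plus_e0_def even_part_def clone_def blade_def)
  hence aS: "scale (W {}) S = scale 2 clone" using even_part_clcenter_mul_cleven[OF on W S] T by simp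
  have "W {} \<noteq> 0"
  proof
    assume "W {} = 0"
    hence "scale 2 clone {} = (czero :: nat set \<Rightarrow> 'a) {}" using aS by simp
    thus False by (simp add: clone_def czero_def)
  qed
  hence "S = scale (2 / W {}) clone" using arg_cong[OF aS, of "scale (1 / W {})"] by simp
  hence TW: "two_plus_e0 = scale (2 / W {}) W" using T clcenter_clalg[OF W] by (simp add: mul_scale_right)
  have W0: "W {0} = 0"
  proof -
    have "{0::nat} \<noteq> {..<n}"
    proof
      assume "{0} = {..<n}"
      moreover have "1 \<in> {..<n}" using n_ge_2 by simp
      ultimately show False by (metis singletonD zero_neq_one)
    qed
    thus ?thesis using W by (auto simp: clcenter_iff span1I_def)
  qed
  have "two_plus_e0 {0} = 1" by (rule two_plus_e0_facts(3))
  thus False unfolding TW scale_apply W0 by simp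
qed

lemma setQ_subset_setP: "setQ n eta \<subseteq> (setP n eta :: (nat set \<Rightarrow> 'a) set)" by (auto simp: setQ_def)

lemma gamma_claims_0mod4:
  assumes h: "n \<ge> 4" "n mod 4 = 0"
  shows "setQ n eta = Gamma n eta 1 \<and> Gamma n eta 1 = Gamma n eta 3 \<and>
    setQ' n eta = Gamma n eta 0 \<and> Gamma n eta 0 = Gamma n eta 2 \<and> setQ n eta \<noteq> setQ' n eta"
proof -
  have en: "even n" using h by presburger
  have "Gamma n eta 0 \<subseteq> setQ' n eta"
    using Gamma0_subset_setQ'_n4 Gamma_subset_setQ'_0mod4[of 0] h by (cases "n = 4") auto
  hence g0: "Gamma n eta 0 = setQ' n eta" using setQ'_subset_Gamma[OF en, of 0] by blast
  have g2: "Gamma n eta 2 = setQ' n eta"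
    using Gamma_subset_setQ'_0mod4[of 2] h setQ'_subset_Gamma[OF en, of 2] by auto
  show ?thesis using Gamma1_eq_setQ Gamma3_eq_setQ h g0 g2 setQ_neq_setQ' by auto
qed

lemma gamma_claims_other_mod4:
  assumes h: "n \<ge> 4" "n mod 4 \<in> {1, 2, 3}"
  shows "setQ n eta = Gamma n eta 0 \<and> Gamma n eta 0 = Gamma n eta 1 \<and>
    Gamma n eta 1 = Gamma n eta 2 \<and> Gamma n eta 2 = Gamma n eta 3"
proof -
  have n5: "n \<ge> 5" using h by (cases "n = 4") auto
  have "Gamma n eta 0 = setQ n eta \<and> Gamma n eta 2 = setQ n eta"
  proof (cases "odd n")
    case True
    thus ?thesis using Gamma0_eq_setQ_odd Gamma2_eq_setQ_odd n5 by auto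
  next
    case False
    with h have "n mod 4 = 2" by auto presburger+
    thus ?thesis using Gamma_eq_setQ_2mod4 n5 by auto
  qed
  thus ?thesis using Gamma1_eq_setQ Gamma3_eq_setQ h by auto
qed

lemma gamma_claims_n2:
  assumes n: "n = 2"
  shows "Gamma n eta 0 = clunits n eta Cl \<and> Gamma n eta 1 = Gamma n eta 2 \<and>
    Gamma n eta 2 = setQ n eta \<and> setQ n eta = setP n eta \<and>
    setP n eta = clunits n eta (cleven n) \<union> clunits n eta (clodd n) \<and>
    clunits n eta (cleven n) \<union> clunits n eta (clodd n) \<noteq> clunits n eta Cl"
proof -
  have en: "even n" using n by simp
  have PE: "setP n eta = clunits n eta (cleven n) \<union> clunits n eta (clodd n)"
  proof
    show "setP n eta \<subseteq> clunits n eta (cleven n) \<union> clunits n eta (clodd n)"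
      using setP_homogeneous_even[OF en] by blast
    show "clunits n eta (cleven n) \<union> clunits n eta (clodd n) \<subseteq> setP n eta"
      using homogeneous_setP by (auto simp: clunits_iff)
  qed
  have "setQ n eta = setP n eta" using setQ_subset_setP setP_subset_setQ_small n by (simp add: subset_antisym)
  thus ?thesis using Gamma0_small Gamma1_eq_setQ Gamma_eq_setQ_2mod4[of 2] n PE
      homogeneous_units_neq_clunits by auto
qed

lemma gamma_claims_n3:
  assumes n: "n = 3"
  shows "Gamma n eta 0 = clunits n eta Cl \<and> Gamma n eta 3 = clunits n eta Cl \<and>
    Gamma n eta 1 = Gamma n eta 2 \<and> Gamma n eta 2 = setQ n eta \<and> setQ n eta = setP n eta \<and>
    setP n eta = {W \<odot> T | W T. W \<in> clunits n eta (clcenter n) \<and> T \<in> clunits n eta (cleven n)} \<and>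
    {W \<odot> T | W T. W \<in> clunits n eta (clcenter n) \<and> T \<in> clunits n eta (cleven n)} \<noteq> clunits n eta Cl"
proof -
  have on: "odd n" using n by simp
  have "setQ n eta = setP n eta" using setQ_subset_setP setP_subset_setQ_small n by (simp add: subset_antisym)
  thus ?thesis using Gamma0_small Gamma3_n3 Gamma1_eq_setQ Gamma2_eq_setQ_odd[OF on] n
      setP_eq_center_even[OF on] center_even_units_neq_clunits[OF on] by auto
qed

lemma gamma_claims_all_k:
  "(\<forall>k\<in>{0, 1, 2, 3}. Gamma n eta 1 \<subseteq> Gamma n eta k) \<and> Gamma n eta 1 = setQ n eta \<and>
    setQ n eta = {T \<in> clunits n eta Cl. \<forall>k\<in>{0, 1, 2, 3}. \<forall>X \<in> grmod4 n k. T \<odot> X \<odot> cinv T \<in> grmod4 n k}"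
proof -
  have sub: "setQ n eta \<subseteq> Gamma n eta k" if "k \<in> {0, 1, 2, 3}" for k
    using setQ_subset_Gamma[of k] that by auto
  hence "setQ n eta = {T \<in> clunits n eta Cl. \<forall>k\<in>{0, 1, 2, 3}. \<forall>X \<in> grmod4 n k. T \<odot> X \<odot> cinv T \<in> grmod4 n k}"
    using Gamma1_eq_setQ by (auto simp: Gamma_def)
  thus ?thesis using sub Gamma1_eq_setQ by auto
qed

lemma gamma_claims_hold: "gamma_claims n eta"
  unfolding gamma_claims_def
  by (intro conjI; rule impI; (elim conjE)?;
      rule gamma_claims_0mod4 gamma_claims_other_mod4 gamma_claims_n2 gamma_claims_n3 gamma_claims_all_k;
      assumption)

end

theorem mainTheorem11:
  fixes p q n :: nat
  assumes "n \<ge> 2"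
  shows "(p + q = n \<longrightarrow> gamma_claims n (sig_pq p)) \<and> gamma_claims n (\<lambda>_. (1::complex))"
proof -
  interpret r: clifford_ge2 n "sig_pq p" by unfold_locales (auto simp: sig_pq_def assms)
  interpret c: clifford_ge2 n "\<lambda>_. (1::complex)" by unfold_locales (auto simp: assms)
  show ?thesis using r.gamma_claims_hold c.gamma_claims_hold by blast
qed

end
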